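(* Let $(\mathcal{B},d)$ be a dg-coalgebra over a field $k$ with counit, and let $M$ be a graded $k$-vector space. Let $d_M$ be a differential on the free (cofree) $\mathcal{B}$-comodule $\mathcal{B}\otimes M$ making it a dg-comodule over $\mathcal{B}$, and let $\overline{d}_M:\mathcal{B}\otimes M\to M$ be its component (so $d_M(b\otimes m)=(\mathrm{id}\otimes\overline{d}_M)(\Delta(b)\otimes m)+db\otimes m$). Consider $\operatorname{Hom}_{gr}(\mathcal{B},M)$ as a right module over the dual graded algebra $\mathcal{B}^*$ via $\phi\cdot b^*=(\phi\otimes b^* )\circ\Delta$. Then the map $$d_M^{\vee}(\phi)(b)=\sum_i(-1)^{\deg b_i\deg\phi}\,\overline{d}_M(b_i\otimes\phi(b_i'))-(-1)^{\deg\phi}\phi(db),\qquad \Delta(b)=\sum_ib_i\otimes b_i',$$ is a differential of degree $1$ making $\operatorname{Hom}_{gr}(\mathcal{B},M)$ a right dg-module over the dg-algebra $(\mathcal{B}^*,d)$. Moreover, this construction extends to a dg-functor from the dg-category of dg-comodules over $\mathcal{B}$ that are free as $\mathcal{B}$-comodules to the dg-category of right dg-modules over $\mathcal{B}^*$, sending a comodule morphism $f:\mathcal{B}\otimes M\to\mathcal{B}\otimes M'$ with component $\overline{f}:\mathcal{B}\otimes M\to M'$ to $f^{\vee}(\phi)(b)=\sum_i(-1)^{\deg b_i\deg\phi}\overline{f}(b_i\otimes\phi(b_i'))$.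
   Context: For graded vector spaces $V,W$, $\operatorname{Hom}_{gr}(V,W)=\bigoplus_n\operatorname{Hom}(V,W)_n$ with $\operatorname{Hom}(V,W)_n=\prod_i\operatorname{Hom}(V_i,W_{i+n})$. The dual dg-algebra $\mathcal{B}^*$ has differential $(db^* )(b)=(-1)^{\deg b}b^*(db)$ and product $(b_1^*b_2^* )(b)=\sum_i(-1)^{\deg b_i\deg b_i'}b_1^*(b_i)b_2^*(b_i')$. In the dg-category of dg-comodules (resp. dg-modules), $\operatorname{Hom}^n$ consists of degree $n$ comodule (resp. module) maps, with differential $f\mapsto d\circ f-(-1)^{\deg f}f\circ d$ and composition of maps. *)

theory Defs
  imports "HOL-Library.Poly_Mapping" "HOL-Library.Function_Algebras"
begin

text \<open>
  A graded k-vector space is represented by a homogeneous basis: a type 'a of basis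
  vectors together with a degree function deg :: 'a => int.  The vectors are the
  finitely supported coefficient functions 'a =>0 'k.  A linear map V -> W is given
  by its values on the basis, f :: 'a => ('c =>0 'k), and 'lin f' is its linear
  extension.  Tensor products of free spaces have the product basis, with additive
  degree.  Every graded vector space over a field has a homogeneous basis, so this
  loses no generality.
\<close>

definition ksign :: "int \<Rightarrow> 'k::field" where
  "ksign n = (if even n then 1 else - 1)"

definition sc :: "'k::field \<Rightarrow> ('a \<Rightarrow>\<^sub>0 'k) \<Rightarrow> ('a \<Rightarrow>\<^sub>0 'k)" where
  "sc c v = Poly_Mapping.map (\<lambda>x. c * x) v"

definition bvec :: "'a \<Rightarrow> ('a \<Rightarrow>\<^sub>0 'k::field)" where
  "bvec a = Poly_Mapping.single a 1"

definition lin :: "('a \<Rightarrow> ('c \<Rightarrow>\<^sub>0 'k::field)) \<Rightarrow> ('a \<Rightarrow>\<^sub>0 'k) \<Rightarrow> ('c \<Rightarrow>\<^sub>0 'k)" where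
  "lin f v = (\<Sum>a\<in>Poly_Mapping.keys v. sc (Poly_Mapping.lookup v a) (f a))"

definition lfun :: "('a \<Rightarrow> 'k::field) \<Rightarrow> ('a \<Rightarrow>\<^sub>0 'k) \<Rightarrow> 'k" where
  "lfun f v = (\<Sum>a\<in>Poly_Mapping.keys v. Poly_Mapping.lookup v a * f a)"

definition ltens :: "'a \<Rightarrow> ('c \<Rightarrow>\<^sub>0 'k::field) \<Rightarrow> ('a \<times> 'c \<Rightarrow>\<^sub>0 'k)" where
  "ltens a w = lin (\<lambda>z. bvec (a, z)) w"

definition rtens :: "('a \<Rightarrow>\<^sub>0 'k::field) \<Rightarrow> 'c \<Rightarrow> ('a \<times> 'c \<Rightarrow>\<^sub>0 'k)" where
  "rtens v c = lin (\<lambda>z. bvec (z, c)) v"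

definition tdeg :: "('b \<Rightarrow> int) \<Rightarrow> ('m \<Rightarrow> int) \<Rightarrow> 'b \<times> 'm \<Rightarrow> int" where
  "tdeg degB degM = (\<lambda>(b, m). degB b + degM m)"

text \<open>
  A dg-coalgebra with counit (B, Delta, eps, d): B has homogeneous basis 'b with degrees degB;
  Delta (comultiplication, degree 0), eps (counit, degree 0) and d (differential of degree 1)
  are given on basis vectors.  Koszul sign rule: (f (x) g)(x (x) y) = (-1)^(|g||x|) f x (x) g y.
\<close>
definition dg_coalgebra ::
  "('b \<Rightarrow> int) \<Rightarrow> ('b \<Rightarrow> ('b \<times> 'b \<Rightarrow>\<^sub>0 'k::field)) \<Rightarrow> ('b \<Rightarrow> 'k) \<Rightarrow> ('b \<Rightarrow> ('b \<Rightarrow>\<^sub>0 'k)) \<Rightarrow> bool"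
where
  "dg_coalgebra degB Delta eps d \<longleftrightarrow>
     (\<forall>j. \<forall>(p, q)\<in>Poly_Mapping.keys (Delta j). degB p + degB q = degB j) \<and>
     (\<forall>j. eps j \<noteq> 0 \<longrightarrow> degB j = 0) \<and>
     (\<forall>j. \<forall>p\<in>Poly_Mapping.keys (d j). degB p = degB j + 1) \<and>
     \<comment> \<open>coassociativity: (Delta (x) id) Delta = (id (x) Delta) Delta\<close>
     (\<forall>j. lin (\<lambda>(p, q). lin (\<lambda>(a, b). bvec (a, (b, q))) (Delta p)) (Delta j)
          = lin (\<lambda>(p, q). ltens p (Delta q)) (Delta j)) \<and>
     \<comment> \<open>counit: (eps (x) id) Delta = id = (id (x) eps) Delta\<close>
     (\<forall>j. lin (\<lambda>(p, q). sc (eps p) (bvec q)) (Delta j) = bvec j) \<and>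
     (\<forall>j. lin (\<lambda>(p, q). sc (eps q) (bvec p)) (Delta j) = bvec j) \<and>
     \<comment> \<open>d o d = 0\<close>
     (\<forall>j. lin d (d j) = 0) \<and>
     \<comment> \<open>d is a coderivation: Delta d = (d (x) id + id (x) d) Delta\<close>
     (\<forall>j. lin Delta (d j)
          = lin (\<lambda>(p, q). rtens (d p) q + sc (ksign (degB p)) (ltens p (d q))) (Delta j)) \<and>
     \<comment> \<open>the counit is a chain map: eps o d = 0\<close>
     (\<forall>j. lfun eps (d j) = 0)"

text \<open>A linear form on B is given by its values on the basis, beta :: 'b => 'k.
  Hom_gr(B,k) is the direct sum over n of Hom(B_{-n}, k): the forms that are nonzero
  on basis vectors of only finitely many degrees.\<close>
definition dual_el :: "('b \<Rightarrow> int) \<Rightarrow> ('b \<Rightarrow> 'k::field) \<Rightarrow> bool" where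
  "dual_el degB beta \<longleftrightarrow> finite {degB j | j. beta j \<noteq> 0}"

definition dual_homog :: "('b \<Rightarrow> int) \<Rightarrow> int \<Rightarrow> ('b \<Rightarrow> 'k::field) \<Rightarrow> bool" where
  "dual_homog degB n beta \<longleftrightarrow> (\<forall>j. beta j \<noteq> 0 \<longrightarrow> degB j = - n)"

definition dual_d :: "('b \<Rightarrow> int) \<Rightarrow> ('b \<Rightarrow> ('b \<Rightarrow>\<^sub>0 'k::field)) \<Rightarrow> ('b \<Rightarrow> 'k) \<Rightarrow> ('b \<Rightarrow> 'k)" where
  "dual_d degB d beta = (\<lambda>j. ksign (degB j) * lfun beta (d j))"

definition dual_mult ::
  "('b \<Rightarrow> int) \<Rightarrow> ('b \<Rightarrow> ('b \<times> 'b \<Rightarrow>\<^sub>0 'k::field)) \<Rightarrow> ('b \<Rightarrow> 'k) \<Rightarrow> ('b \<Rightarrow> 'k) \<Rightarrow> ('b \<Rightarrow> 'k)"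
where
  "dual_mult degB Delta beta1 beta2 =
     (\<lambda>j. \<Sum>(p, q)\<in>Poly_Mapping.keys (Delta j). Poly_Mapping.lookup (Delta j) (p, q) * ksign (degB p * degB q) * beta1 p * beta2 q)"

text \<open>A linear map phi : B -> M is given by its values on the basis of B.\<close>
definition hom_homog :: "('b \<Rightarrow> int) \<Rightarrow> ('m \<Rightarrow> int) \<Rightarrow> int \<Rightarrow> ('b \<Rightarrow> ('m \<Rightarrow>\<^sub>0 'k::field)) \<Rightarrow> bool" where
  "hom_homog degB degM n phi \<longleftrightarrow> (\<forall>j. \<forall>x\<in>Poly_Mapping.keys (phi j). degM x = degB j + n)"

definition hdegs :: "('b \<Rightarrow> int) \<Rightarrow> ('m \<Rightarrow> int) \<Rightarrow> ('b \<Rightarrow> ('m \<Rightarrow>\<^sub>0 'k::field)) \<Rightarrow> int set" where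
  "hdegs degB degM phi = {degM x - degB j | j x. x \<in> Poly_Mapping.keys (phi j)}"

text \<open>Hom_gr(B,M) = direct sum over n of Hom(B,M)_n = prod_i Hom(B_i, M_{i+n})\<close>
definition hom_gr :: "('b \<Rightarrow> int) \<Rightarrow> ('m \<Rightarrow> int) \<Rightarrow> ('b \<Rightarrow> ('m \<Rightarrow>\<^sub>0 'k::field)) \<Rightarrow> bool" where
  "hom_gr degB degM phi \<longleftrightarrow> finite (hdegs degB degM phi)"

definition hpart :: "('b \<Rightarrow> int) \<Rightarrow> ('m \<Rightarrow> int) \<Rightarrow> int \<Rightarrow> ('b \<Rightarrow> ('m \<Rightarrow>\<^sub>0 'k::field)) \<Rightarrow> ('b \<Rightarrow> ('m \<Rightarrow>\<^sub>0 'k))" where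
  "hpart degB degM n phi = (\<lambda>j. lin (\<lambda>x. if degM x = degB j + n then bvec x else 0) (phi j))"

text \<open>linear extension of an operation defined on homogeneous elements (op n acts on degree n)\<close>
definition hext ::
  "('b \<Rightarrow> int) \<Rightarrow> ('m \<Rightarrow> int) \<Rightarrow> (int \<Rightarrow> ('b \<Rightarrow> ('m \<Rightarrow>\<^sub>0 'k::field)) \<Rightarrow> ('b \<Rightarrow> ('n \<Rightarrow>\<^sub>0 'k)))
     \<Rightarrow> ('b \<Rightarrow> ('m \<Rightarrow>\<^sub>0 'k)) \<Rightarrow> ('b \<Rightarrow> ('n \<Rightarrow>\<^sub>0 'k))"
where
  "hext degB degM op phi = (\<lambda>j. \<Sum>n\<in>hdegs degB degM phi. op n (hpart degB degM n phi) j)"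

definition hsc :: "'k::field \<Rightarrow> ('b \<Rightarrow> ('m \<Rightarrow>\<^sub>0 'k)) \<Rightarrow> ('b \<Rightarrow> ('m \<Rightarrow>\<^sub>0 'k))" where
  "hsc c phi = (\<lambda>j. sc c (phi j))"

text \<open>right B*-module structure: phi . b* = (phi (x) b*) o Delta, with the Koszul sign
  (-1)^(deg b* deg b_i) = (-1)^(deg b_i deg b_i') on the nonzero terms\<close>
definition act ::
  "('b \<Rightarrow> int) \<Rightarrow> ('b \<Rightarrow> ('b \<times> 'b \<Rightarrow>\<^sub>0 'k::field)) \<Rightarrow> ('b \<Rightarrow> ('m \<Rightarrow>\<^sub>0 'k)) \<Rightarrow> ('b \<Rightarrow> 'k) \<Rightarrow> ('b \<Rightarrow> ('m \<Rightarrow>\<^sub>0 'k))"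
where
  "act degB Delta phi beta =
     (\<lambda>j. \<Sum>(p, q)\<in>Poly_Mapping.keys (Delta j). sc (Poly_Mapping.lookup (Delta j) (p, q) * ksign (degB p * degB q) * beta q) (phi p))"

definition coact :: "('b \<Rightarrow> ('b \<times> 'b \<Rightarrow>\<^sub>0 'k::field)) \<Rightarrow> 'b \<times> 'm \<Rightarrow> ('b \<times> ('b \<times> 'm) \<Rightarrow>\<^sub>0 'k)" where
  "coact Delta = (\<lambda>(j, x). lin (\<lambda>(p, q). bvec (p, (q, x))) (Delta j))"

definition free_dg_comodule ::
  "('b \<Rightarrow> int) \<Rightarrow> ('b \<Rightarrow> ('b \<times> 'b \<Rightarrow>\<^sub>0 'k::field)) \<Rightarrow> ('b \<Rightarrow> ('b \<Rightarrow>\<^sub>0 'k))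
     \<Rightarrow> ('m \<Rightarrow> int) \<Rightarrow> ('b \<times> 'm \<Rightarrow> ('b \<times> 'm \<Rightarrow>\<^sub>0 'k)) \<Rightarrow> bool"
where
  "free_dg_comodule degB Delta d degM dM \<longleftrightarrow>
     (\<forall>y. \<forall>z\<in>Poly_Mapping.keys (dM y). tdeg degB degM z = tdeg degB degM y + 1) \<and>
     (\<forall>y. lin dM (dM y) = 0) \<and>
     (\<forall>y. lin (coact Delta) (dM y)
          = lin (\<lambda>(p, z). rtens (d p) z + sc (ksign (degB p)) (ltens p (dM z))) (coact Delta y))"

definition comod_hom ::
  "('b \<Rightarrow> int) \<Rightarrow> ('b \<Rightarrow> ('b \<times> 'b \<Rightarrow>\<^sub>0 'k::field)) \<Rightarrow> ('m \<Rightarrow> int) \<Rightarrow> ('n \<Rightarrow> int) \<Rightarrow> int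
     \<Rightarrow> ('b \<times> 'm \<Rightarrow> ('b \<times> 'n \<Rightarrow>\<^sub>0 'k)) \<Rightarrow> bool"
where
  "comod_hom degB Delta degM degN n f \<longleftrightarrow>
     (\<forall>y. \<forall>z\<in>Poly_Mapping.keys (f y). tdeg degB degN z = tdeg degB degM y + n) \<and>
     (\<forall>y. lin (coact Delta) (f y)
          = lin (\<lambda>(p, z). sc (ksign (n * degB p)) (ltens p (f z))) (coact Delta y))"

text \<open>component  F-bar = (eps (x) id) o F : B (x) M -> N  of a map F : B (x) M -> B (x) N\<close>
definition comp :: "('b \<Rightarrow> 'k::field) \<Rightarrow> ('b \<times> 'm \<Rightarrow> ('b \<times> 'n \<Rightarrow>\<^sub>0 'k)) \<Rightarrow> ('b \<times> 'm \<Rightarrow> ('n \<Rightarrow>\<^sub>0 'k))" where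
  "comp eps F = (\<lambda>y. lin (\<lambda>(p, z). sc (eps p) (bvec z)) (F y))"

definition dvee_h ::
  "('b \<Rightarrow> int) \<Rightarrow> ('b \<Rightarrow> ('b \<times> 'b \<Rightarrow>\<^sub>0 'k::field)) \<Rightarrow> ('b \<Rightarrow> 'k) \<Rightarrow> ('b \<Rightarrow> ('b \<Rightarrow>\<^sub>0 'k))
     \<Rightarrow> ('b \<times> 'm \<Rightarrow> ('b \<times> 'm \<Rightarrow>\<^sub>0 'k)) \<Rightarrow> int \<Rightarrow> ('b \<Rightarrow> ('m \<Rightarrow>\<^sub>0 'k)) \<Rightarrow> ('b \<Rightarrow> ('m \<Rightarrow>\<^sub>0 'k))"
where
  "dvee_h degB Delta eps d dM n phi =
     (\<lambda>j. lin (\<lambda>(p, q). sc (ksign (degB p * n)) (lin (comp eps dM) (ltens p (phi q)))) (Delta j)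
          - sc (ksign n) (lin phi (d j)))"

definition dvee ::
  "('b \<Rightarrow> int) \<Rightarrow> ('b \<Rightarrow> ('b \<times> 'b \<Rightarrow>\<^sub>0 'k::field)) \<Rightarrow> ('b \<Rightarrow> 'k) \<Rightarrow> ('b \<Rightarrow> ('b \<Rightarrow>\<^sub>0 'k))
     \<Rightarrow> ('m \<Rightarrow> int) \<Rightarrow> ('b \<times> 'm \<Rightarrow> ('b \<times> 'm \<Rightarrow>\<^sub>0 'k)) \<Rightarrow> ('b \<Rightarrow> ('m \<Rightarrow>\<^sub>0 'k)) \<Rightarrow> ('b \<Rightarrow> ('m \<Rightarrow>\<^sub>0 'k))"
where
  "dvee degB Delta eps d degM dM = hext degB degM (dvee_h degB Delta eps d dM)"

definition fvee_h ::
  "('b \<Rightarrow> int) \<Rightarrow> ('b \<Rightarrow> ('b \<times> 'b \<Rightarrow>\<^sub>0 'k::field)) \<Rightarrow> ('b \<Rightarrow> 'k)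
     \<Rightarrow> ('b \<times> 'm \<Rightarrow> ('b \<times> 'n \<Rightarrow>\<^sub>0 'k)) \<Rightarrow> int \<Rightarrow> ('b \<Rightarrow> ('m \<Rightarrow>\<^sub>0 'k)) \<Rightarrow> ('b \<Rightarrow> ('n \<Rightarrow>\<^sub>0 'k))"
where
  "fvee_h degB Delta eps f n phi =
     (\<lambda>j. lin (\<lambda>(p, q). sc (ksign (degB p * n)) (lin (comp eps f) (ltens p (phi q)))) (Delta j))"

definition fvee ::
  "('b \<Rightarrow> int) \<Rightarrow> ('b \<Rightarrow> ('b \<times> 'b \<Rightarrow>\<^sub>0 'k::field)) \<Rightarrow> ('b \<Rightarrow> 'k) \<Rightarrow> ('m \<Rightarrow> int)
     \<Rightarrow> ('b \<times> 'm \<Rightarrow> ('b \<times> 'n \<Rightarrow>\<^sub>0 'k)) \<Rightarrow> ('b \<Rightarrow> ('m \<Rightarrow>\<^sub>0 'k)) \<Rightarrow> ('b \<Rightarrow> ('n \<Rightarrow>\<^sub>0 'k))"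
where
  "fvee degB Delta eps degM f = hext degB degM (fvee_h degB Delta eps f)"

definition right_dg_module_hom ::
  "('b \<Rightarrow> int) \<Rightarrow> ('b \<Rightarrow> ('b \<times> 'b \<Rightarrow>\<^sub>0 'k::field)) \<Rightarrow> ('b \<Rightarrow> 'k) \<Rightarrow> ('b \<Rightarrow> ('b \<Rightarrow>\<^sub>0 'k))
     \<Rightarrow> ('m \<Rightarrow> int) \<Rightarrow> (('b \<Rightarrow> ('m \<Rightarrow>\<^sub>0 'k)) \<Rightarrow> ('b \<Rightarrow> ('m \<Rightarrow>\<^sub>0 'k))) \<Rightarrow> bool"
where
  "right_dg_module_hom degB Delta eps d degM D \<longleftrightarrow>
     \<comment> \<open>D is a k-linear differential of degree 1 on Hom_gr(B,M)\<close>
     (\<forall>phi. hom_gr degB degM phi \<longrightarrow> hom_gr degB degM (D phi)) \<and>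
     (\<forall>n phi. hom_homog degB degM n phi \<longrightarrow> hom_homog degB degM (n + 1) (D phi)) \<and>
     (\<forall>phi psi. hom_gr degB degM phi \<longrightarrow> hom_gr degB degM psi \<longrightarrow> D (phi + psi) = D phi + D psi) \<and>
     (\<forall>c phi. hom_gr degB degM phi \<longrightarrow> D (hsc c phi) = hsc c (D phi)) \<and>
     (\<forall>phi. hom_gr degB degM phi \<longrightarrow> D (D phi) = 0) \<and>
     \<comment> \<open>graded right module over B*\<close>
     (\<forall>phi beta. hom_gr degB degM phi \<longrightarrow> dual_el degB beta \<longrightarrow> hom_gr degB degM (act degB Delta phi beta)) \<and>
     (\<forall>n m phi beta. hom_homog degB degM n phi \<longrightarrow> dual_homog degB m beta
        \<longrightarrow> hom_homog degB degM (n + m) (act degB Delta phi beta)) \<and>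
     (\<forall>(phi :: 'b \<Rightarrow> ('m \<Rightarrow>\<^sub>0 'k)) psi beta. act degB Delta (phi + psi) beta = act degB Delta phi beta + act degB Delta psi beta) \<and>
     (\<forall>(phi :: 'b \<Rightarrow> ('m \<Rightarrow>\<^sub>0 'k)) beta gamma. act degB Delta phi (beta + gamma) = act degB Delta phi beta + act degB Delta phi gamma) \<and>
     (\<forall>c (phi :: 'b \<Rightarrow> ('m \<Rightarrow>\<^sub>0 'k)) beta. act degB Delta (hsc c phi) beta = hsc c (act degB Delta phi beta)) \<and>
     (\<forall>c (phi :: 'b \<Rightarrow> ('m \<Rightarrow>\<^sub>0 'k)) beta. act degB Delta phi (\<lambda>j. c * beta j) = hsc c (act degB Delta phi beta)) \<and>
     (\<forall>phi beta gamma. hom_gr degB degM phi \<longrightarrow> dual_el degB beta \<longrightarrow> dual_el degB gamma \<longrightarrow>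
        act degB Delta (act degB Delta phi beta) gamma = act degB Delta phi (dual_mult degB Delta beta gamma)) \<and>
     (\<forall>phi. hom_gr degB degM phi \<longrightarrow> act degB Delta phi eps = phi) \<and>
     \<comment> \<open>Leibniz rule\<close>
     (\<forall>n phi beta. hom_homog degB degM n phi \<longrightarrow> dual_el degB beta \<longrightarrow>
        D (act degB Delta phi beta)
          = act degB Delta (D phi) beta + hsc (ksign n) (act degB Delta phi (dual_d degB d beta)))"

end

theory Submission
  imports Defs "HOL.Modules"
begin

text \<open>
  A degree n map \<phi> : B \<rightarrow> M corresponds to the degree n comodule map
  (id \<otimes> \<phi>) \<circ> \<Delta> : B \<rightarrow> B \<otimes> M (with the Koszul sign), with inverse G \<mapsto> (\<epsilon> \<otimes> id) \<circ> G.
  Under this correspondence f^\<vee>(\<phi>) is the corestriction of f \<circ> (id \<otimes> \<phi>) \<circ> \<Delta>, and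
  d^\<vee>(\<phi>) that of the graded commutator of d_M with (id \<otimes> \<phi>) \<circ> \<Delta>, which is again a
  comodule map. Hence d^\<vee> \<circ> d^\<vee> = 0, (g \<circ> f)^\<vee> = g^\<vee> \<circ> f^\<vee>, id^\<vee> = id and the compatibility of
  f^\<vee> with the differentials are inherited from the corresponding identities of comodule maps.
  The module axioms and the Leibniz rule follow from coassociativity, the counit and the
  coderivation property of d by Koszul sign bookkeeping. Each identity is checked on
  homogeneous \<phi> and \<beta> and extends additively.
\<close>


section \<open>Linear extension\<close>

lemma lookup_sc [simp]: "Poly_Mapping.lookup (sc c v) x = c * Poly_Mapping.lookup v x"
  by (simp add: sc_def Poly_Mapping.map.rep_eq when_def)

lemma keys_sc_subset: "Poly_Mapping.keys (sc c v) \<subseteq> Poly_Mapping.keys v"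
  by (auto simp: in_keys_iff)

lemma sc_add: "sc c (v + w) = sc c v + sc c w"
  by (rule poly_mapping_eqI) (simp add: lookup_add algebra_simps)

interpretation sc: additive "sc c" for c
  by unfold_locales (rule sc_add)

lemma sc_sc [simp]: "sc c (sc c' v) = sc (c * c') v"
  by (rule poly_mapping_eqI) simp

lemma sc_one [simp]: "sc 1 v = v"
  by (rule poly_mapping_eqI) simp

lemma sc_zero_left [simp]: "sc 0 v = 0"
  by (rule poly_mapping_eqI) simp

lemma sc_zero_right [simp]: "sc c 0 = 0"
  by (rule sc.zero)

lemma sc_uminus_left: "sc (- c) v = - sc c v"
  by (rule poly_mapping_eqI) simp

lemma sc_minus_one: "sc (- 1) v = - v"
  by (rule poly_mapping_eqI) simp

lemma sc_add_left: "sc (a + b) v = sc a v + sc b v"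
  by (rule poly_mapping_eqI) (simp add: lookup_add algebra_simps)

lemma lookup_lin:
  "Poly_Mapping.lookup (lin f v) x
     = (\<Sum>a\<in>Poly_Mapping.keys v. Poly_Mapping.lookup v a * Poly_Mapping.lookup (f a) x)"
  by (simp add: lin_def lookup_sum)

lemma lookup_lin_superset:
  assumes "finite S" "Poly_Mapping.keys v \<subseteq> S"
  shows "Poly_Mapping.lookup (lin f v) x
           = (\<Sum>a\<in>S. Poly_Mapping.lookup v a * Poly_Mapping.lookup (f a) x)"
  unfolding lookup_lin
  by (rule sum.mono_neutral_left) (use assms in \<open>auto simp: in_keys_iff\<close>)

lemma keys_lin_subset:
  "Poly_Mapping.keys (lin f v) \<subseteq> (\<Union>a\<in>Poly_Mapping.keys v. Poly_Mapping.keys (f a))"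
proof
  fix b assume "b \<in> Poly_Mapping.keys (lin f v)"
  then have "(\<Sum>a\<in>Poly_Mapping.keys v. Poly_Mapping.lookup v a * Poly_Mapping.lookup (f a) b) \<noteq> 0"
    by (simp add: in_keys_iff lookup_lin)
  then obtain a where "a \<in> Poly_Mapping.keys v" "Poly_Mapping.lookup v a * Poly_Mapping.lookup (f a) b \<noteq> 0"
    by (meson sum.neutral)
  then show "b \<in> (\<Union>a\<in>Poly_Mapping.keys v. Poly_Mapping.keys (f a))"
    by (auto simp: in_keys_iff)
qed

lemma lin_add: "lin f (v + w) = lin f v + lin f w"
proof (rule poly_mapping_eqI)
  fix x
  let ?S = "Poly_Mapping.keys v \<union> Poly_Mapping.keys w"
  have "Poly_Mapping.keys (v + w) \<subseteq> ?S" by (rule keys_add)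
  then show "Poly_Mapping.lookup (lin f (v + w)) x = Poly_Mapping.lookup (lin f v + lin f w) x"
    by (simp add: lookup_add lookup_lin_superset[of ?S] sum.distrib algebra_simps)
qed

interpretation lin: additive "lin f" for f
  by unfold_locales (rule lin_add)

declare lin.zero [simp]

lemma lin_sc: "lin f (sc c v) = sc c (lin f v)"
proof (rule poly_mapping_eqI)
  fix x
  show "Poly_Mapping.lookup (lin f (sc c v)) x = Poly_Mapping.lookup (sc c (lin f v)) x"
    using keys_sc_subset[of c v]
    by (simp add: lookup_lin_superset[of "Poly_Mapping.keys v"] sum_distrib_left algebra_simps)
qed

interpretation lin_fun: additive "\<lambda>f. lin f v" for v
  by unfold_locales (rule poly_mapping_eqI, simp add: lookup_lin lookup_add sum.distrib algebra_simps)

lemma lin_fun_add: "lin (\<lambda>a. f a + g a) v = lin f v + lin g v"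
  by (rule poly_mapping_eqI) (simp add: lookup_lin lookup_add sum.distrib algebra_simps)

lemma lin_fun_sc: "lin (\<lambda>a. sc c (f a)) v = sc c (lin f v)"
  by (rule poly_mapping_eqI) (simp add: lookup_lin sum_distrib_left algebra_simps)

lemma lin_fun_zero [simp]: "lin (\<lambda>a. 0) v = 0"
  by (rule poly_mapping_eqI) (simp add: lookup_lin)

lemma lin_fun_diff: "lin (\<lambda>a. f a - g a) v = lin f v - lin g v"
  by (rule poly_mapping_eqI) (simp add: lookup_lin lookup_minus sum_subtractf algebra_simps)

lemma lin_fun_uminus: "lin (\<lambda>a. - f a) v = - lin f v"
  by (rule poly_mapping_eqI) (simp add: lookup_lin sum_negf)

lemma lin_fun_sum: "lin (\<lambda>a. \<Sum>i\<in>I. F i a) v = (\<Sum>i\<in>I. lin (F i) v)"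
  by (induction I rule: infinite_finite_induct) (auto simp: lin_fun_add)

lemma lin_bvec [simp]: "lin f (bvec a) = f a"
  by (simp add: lin_def bvec_def sc_def Poly_Mapping.map.rep_eq poly_mapping_eqI when_def lookup_single)

lemma lin_bvec_id [simp]: "lin bvec v = v"
proof (rule poly_mapping_eqI)
  fix x
  have "(\<Sum>a\<in>Poly_Mapping.keys v. Poly_Mapping.lookup v a * Poly_Mapping.lookup (bvec a) x)
      = (\<Sum>a\<in>Poly_Mapping.keys v. if a = x then Poly_Mapping.lookup v x else 0)"
    by (rule sum.cong) (auto simp: bvec_def lookup_single when_def)
  also have "\<dots> = Poly_Mapping.lookup v x" by (simp add: in_keys_iff)
  finally show "Poly_Mapping.lookup (lin bvec v) x = Poly_Mapping.lookup v x"
    by (simp add: lookup_lin)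
qed

lemma lin_cong: "(\<And>a. a \<in> Poly_Mapping.keys v \<Longrightarrow> f a = g a) \<Longrightarrow> lin f v = lin g v"
  by (simp add: lin_def)

lemma lin_cong_keys:
  "v = w \<Longrightarrow> (\<And>a. a \<in> Poly_Mapping.keys w \<Longrightarrow> f a = g a) \<Longrightarrow> lin f v = lin g w"
  by (simp add: lin_def)

lemma lin_cong_pair:
  "(\<And>p q. (p, q) \<in> Poly_Mapping.keys v \<Longrightarrow> f (p, q) = g (p, q)) \<Longrightarrow> lin f v = lin g v"
  by (rule lin_cong) auto

lemma lin_lin: "lin g (lin f v) = lin (\<lambda>a. lin g (f a)) v"
proof (rule poly_mapping_eqI)
  fix y
  let ?S = "\<Union>a\<in>Poly_Mapping.keys v. Poly_Mapping.keys (f a)"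
  have fin: "finite ?S" by simp
  have "Poly_Mapping.lookup (lin g (lin f v)) y
      = (\<Sum>b\<in>?S. (\<Sum>a\<in>Poly_Mapping.keys v. Poly_Mapping.lookup v a * Poly_Mapping.lookup (f a) b)
                    * Poly_Mapping.lookup (g b) y)"
    by (subst lookup_lin_superset[OF fin keys_lin_subset]) (simp add: lookup_lin)
  also have "\<dots> = (\<Sum>a\<in>Poly_Mapping.keys v. Poly_Mapping.lookup v a
                    * (\<Sum>b\<in>?S. Poly_Mapping.lookup (f a) b * Poly_Mapping.lookup (g b) y))"
    by (simp add: sum_distrib_left sum_distrib_right sum.swap[of _ ?S] algebra_simps)
  also have "\<dots> = (\<Sum>a\<in>Poly_Mapping.keys v. Poly_Mapping.lookup v a * Poly_Mapping.lookup (lin g (f a)) y)"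
    by (rule sum.cong[OF refl], subst lookup_lin_superset[OF fin]) auto
  finally show "Poly_Mapping.lookup (lin g (lin f v)) y = Poly_Mapping.lookup (lin (\<lambda>a. lin g (f a)) v) y"
    by (simp only: lookup_lin[of "\<lambda>a. lin g (f a)"])
qed

lemma lin_swap: "lin (\<lambda>a. lin (\<lambda>b. H a b) w) v = lin (\<lambda>b. lin (\<lambda>a. H a b) v) w"
  by (rule poly_mapping_eqI)
     (simp add: lookup_lin sum_distrib_left sum_distrib_right sum.swap[of _ "Poly_Mapping.keys v"] algebra_simps)

lemma sc_lfun: "sc (lfun g w) v = lin (\<lambda>x. sc (g x) v) w"
  by (rule poly_mapping_eqI)
     (simp add: lfun_def lookup_lin sum_distrib_right sum_distrib_left algebra_simps)

lemma sc_mult_lfun: "sc (x * lfun g w) v = lin (\<lambda>y. sc (x * g y) v) w"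
  by (rule poly_mapping_eqI)
     (simp add: lfun_def lookup_lin sum_distrib_left sum_distrib_right mult_ac)

lemma mult_lfun: "c * lfun g w = lfun (\<lambda>y. c * g y) w"
  by (simp add: lfun_def sum_distrib_left mult_ac)

lemma lin_ltens: "lin g (ltens p w) = lin (\<lambda>z. g (p, z)) w"
  by (simp add: ltens_def lin_lin)

lemma lin_rtens: "lin g (rtens w q) = lin (\<lambda>z. g (z, q)) w"
  by (simp add: rtens_def lin_lin)

lemma ltens_lin: "ltens p (lin f w) = lin (\<lambda>z. ltens p (f z)) w"
  by (simp add: ltens_def lin_lin)

lemma ltens_sc: "ltens p (sc c w) = sc c (ltens p w)"
  by (simp add: ltens_def lin_sc)

interpretation ltens: additive "ltens p" for p
  by unfold_locales (simp add: ltens_def lin_add)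

lemma lin_rtens_ltens: "lin (\<lambda>z. rtens v z) w = lin (\<lambda>p. ltens p w) v"
  by (simp add: rtens_def ltens_def lin_swap[where H = "\<lambda>z p. bvec (p, z)"])

lemma ksign_add: "ksign (a + b) = (ksign a * ksign b :: 'k::field)"
  by (auto simp: ksign_def)

lemma ksign_0 [simp]: "ksign 0 = 1"
  by (simp add: ksign_def)

lemma ksign_mult_self [simp]: "ksign a * ksign a = (1::'k::field)"
  by (simp add: ksign_def)

lemma ksign_mult_self_left [simp]: "ksign a * (ksign a * x) = (x::'k::field)"
  by (simp add: ksign_def)

lemma ksign_plus_1: "ksign (a + 1) = - (ksign a :: 'k::field)"
  by (simp add: ksign_def)

section \<open>Homogeneous decomposition\<close>

lemma sum_apply: "(sum F I) j = (\<Sum>i\<in>I. F i j)"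
  by (induction I rule: infinite_finite_induct) auto

lemma keys_sum_subset: "Poly_Mapping.keys (sum F I) \<subseteq> (\<Union>i\<in>I. Poly_Mapping.keys (F i))"
proof (induction I rule: infinite_finite_induct)
  case (insert x F)
  then show ?case using keys_add by fastforce
qed auto

definition homog_vec :: "('m \<Rightarrow> int) \<Rightarrow> int \<Rightarrow> ('m \<Rightarrow>\<^sub>0 'k::field) \<Rightarrow> bool" where
  "homog_vec deg e w \<longleftrightarrow> (\<forall>x\<in>Poly_Mapping.keys w. deg x = e)"

lemma homog_vec_zero [simp]: "homog_vec deg e 0"
  by (simp add: homog_vec_def)

lemma homog_vec_sc: "homog_vec deg e w \<Longrightarrow> homog_vec deg e (sc c w)"
  unfolding homog_vec_def by (auto simp: in_keys_iff)

lemma homog_vec_add: "homog_vec deg e v \<Longrightarrow> homog_vec deg e w \<Longrightarrow> homog_vec deg e (v + w)"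
  unfolding homog_vec_def by (auto simp: in_keys_iff lookup_add)

lemma homog_vec_diff: "homog_vec deg e v \<Longrightarrow> homog_vec deg e w \<Longrightarrow> homog_vec deg e (v - w)"
  unfolding homog_vec_def by (auto simp: in_keys_iff lookup_minus)

lemma homog_vec_bvec: "homog_vec deg (deg x) (bvec x)"
  by (simp add: homog_vec_def bvec_def)

lemma homog_vec_sum: "(\<And>i. i \<in> I \<Longrightarrow> homog_vec deg e (F i)) \<Longrightarrow> homog_vec deg e (sum F I)"
  by (induction I rule: infinite_finite_induct) (simp_all add: homog_vec_add)

lemma homog_vec_lin:
  "(\<And>a. a \<in> Poly_Mapping.keys v \<Longrightarrow> homog_vec deg e (f a)) \<Longrightarrow> homog_vec deg e (lin f v)"
  unfolding lin_def by (rule homog_vec_sum) (simp add: homog_vec_sc)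

lemma hom_homog_iff: "hom_homog degB degM n phi \<longleftrightarrow> (\<forall>j. homog_vec degM (degB j + n) (phi j))"
  by (simp add: hom_homog_def homog_vec_def)

lemma hsc_add: "hsc c (phi + psi) = hsc c phi + hsc c psi"
  by (rule ext) (simp add: hsc_def sc_add)

interpretation hsc: additive "hsc c" for c
  by unfold_locales (rule hsc_add)

lemma hdegs_subset_if_hom_homog: "hom_homog degB degM n phi \<Longrightarrow> hdegs degB degM phi \<subseteq> {n}"
  by (auto simp: hom_homog_def hdegs_def)

lemma hdegs_sum_subset: "hdegs degB degM (sum F I) \<subseteq> (\<Union>i\<in>I. hdegs degB degM (F i))"
proof
  fix t assume "t \<in> hdegs degB degM (sum F I)"
  then obtain j x where t: "t = degM x - degB j" and x: "x \<in> Poly_Mapping.keys (\<Sum>i\<in>I. F i j)"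
    unfolding hdegs_def sum_apply by blast
  from subsetD[OF keys_sum_subset x] obtain i where "i \<in> I" "x \<in> Poly_Mapping.keys (F i j)"
    by blast
  then show "t \<in> (\<Union>i\<in>I. hdegs degB degM (F i))" using t unfolding hdegs_def by blast
qed

lemma hdegs_add_subset: "hdegs degB degM (phi + psi) \<subseteq> hdegs degB degM phi \<union> hdegs degB degM psi"
proof
  fix t assume "t \<in> hdegs degB degM (phi + psi)"
  then obtain j x where t: "t = degM x - degB j" and x: "x \<in> Poly_Mapping.keys (phi j + psi j)"
    unfolding hdegs_def by auto
  from subsetD[OF keys_add x] show "t \<in> hdegs degB degM phi \<union> hdegs degB degM psi"
    using t unfolding hdegs_def by blast
qed

lemma hdegs_hsc_subset: "hdegs degB degM (hsc c phi) \<subseteq> hdegs degB degM phi"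
  unfolding hdegs_def hsc_def by (auto dest: subsetD[OF keys_sc_subset])

lemma hom_gr_if_hom_homog: "hom_homog degB degM n phi \<Longrightarrow> hom_gr degB degM phi"
  unfolding hom_gr_def by (rule finite_subset[OF hdegs_subset_if_hom_homog]) auto

lemma hom_gr_sum:
  "finite I \<Longrightarrow> (\<And>i. i \<in> I \<Longrightarrow> hom_gr degB degM (F i)) \<Longrightarrow> hom_gr degB degM (sum F I)"
  unfolding hom_gr_def by (rule finite_subset[OF hdegs_sum_subset]) auto

lemma hpart_sum: "hpart degB degM n (sum F I) = (\<Sum>i\<in>I. hpart degB degM n (F i))"
  by (rule ext) (simp add: hpart_def sum_apply lin.sum)

lemma hpart_add: "hpart degB degM n (phi + psi) = hpart degB degM n phi + hpart degB degM n psi"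
  by (rule ext) (simp add: hpart_def lin_add)

lemma hpart_hsc: "hpart degB degM n (hsc c phi) = hsc c (hpart degB degM n phi)"
  by (rule ext) (simp add: hpart_def hsc_def lin_sc)

lemma hom_homog_hpart: "hom_homog degB degM n (hpart degB degM n phi)"
  unfolding hom_homog_iff hpart_def
proof (intro allI homog_vec_lin)
  fix j x
  show "homog_vec degM (degB j + n) (if degM x = degB j + n then bvec x else 0)"
    by (simp add: homog_vec_def bvec_def)
qed

lemma hpart_hom_homog:
  assumes "hom_homog degB degM n phi"
  shows "hpart degB degM m phi = (if m = n then phi else 0)"
proof
  fix j
  have "lin (\<lambda>x. if degM x = degB j + m then bvec x else 0) (phi j)
      = lin (\<lambda>x. if m = n then bvec x else 0) (phi j)"
    by (rule lin_cong) (use assms in \<open>auto simp: hom_homog_def\<close>)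
  then show "hpart degB degM m phi j = (if m = n then phi else 0) j"
    by (simp add: hpart_def)
qed

lemma hpart_eq_0_if_notin: "m \<notin> hdegs degB degM phi \<Longrightarrow> hpart degB degM m phi = 0"
proof
  fix j assume "m \<notin> hdegs degB degM phi"
  then have "lin (\<lambda>x. if degM x = degB j + m then bvec x else 0) (phi j) = lin (\<lambda>x. 0) (phi j)"
    by (intro lin_cong) (auto simp: hdegs_def)
  then show "hpart degB degM m phi j = 0 j" by (simp add: hpart_def)
qed

lemma sum_hpart:
  assumes "finite S" "hdegs degB degM phi \<subseteq> S"
  shows "(\<Sum>n\<in>S. hpart degB degM n phi) = phi"
proof
  fix j
  have "(\<Sum>n\<in>S. hpart degB degM n phi) j
      = lin (\<lambda>x. \<Sum>n\<in>S. if degM x = degB j + n then bvec x else 0) (phi j)"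
    by (simp add: sum_apply hpart_def lin_fun_sum)
  also have "\<dots> = lin bvec (phi j)"
  proof (rule lin_cong)
    fix x assume "x \<in> Poly_Mapping.keys (phi j)"
    then have S: "degM x - degB j \<in> S" using assms(2) by (auto simp: hdegs_def)
    have "(\<Sum>n\<in>S. if degM x = degB j + n then bvec x else 0)
        = (\<Sum>n\<in>S. if n = degM x - degB j then bvec x else 0)"
      by (intro sum.cong) auto
    also have "\<dots> = bvec x" using S assms(1) by simp
    finally show "(\<Sum>n\<in>S. if degM x = degB j + n then bvec x else 0) = bvec x" .
  qed
  finally show "(\<Sum>n\<in>S. hpart degB degM n phi) j = phi j" by simp
qed

lemma hext_superset:
  assumes "finite S" "hdegs degB degM phi \<subseteq> S" "\<And>n. op n 0 = 0"
  shows "hext degB degM op phi = (\<Sum>n\<in>S. op n (hpart degB degM n phi))"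
proof
  fix j
  have "hext degB degM op phi j = (\<Sum>n\<in>hdegs degB degM phi. op n (hpart degB degM n phi) j)"
    by (simp add: hext_def)
  also have "\<dots> = (\<Sum>n\<in>S. op n (hpart degB degM n phi) j)"
    by (rule sum.mono_neutral_left) (use assms in \<open>simp_all add: hpart_eq_0_if_notin\<close>)
  finally show "hext degB degM op phi j = (\<Sum>n\<in>S. op n (hpart degB degM n phi)) j"
    by (simp add: sum_apply)
qed

lemma hext_sum:
  assumes op: "\<And>n. additive (op n)" and fin: "finite I"
    and hom: "\<And>i. i \<in> I \<Longrightarrow> hom_homog degB degM (g i) (F i)"
  shows "hext degB degM op (sum F I) = (\<Sum>i\<in>I. op (g i) (F i))"
proof -
  have hpart: "hpart degB degM n (sum F I) = (\<Sum>i\<in>{i \<in> I. g i = n}. F i)" for n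
  proof -
    have "hpart degB degM n (sum F I) = (\<Sum>i\<in>I. if g i = n then F i else 0)"
      unfolding hpart_sum by (rule sum.cong) (auto simp: hpart_hom_homog[OF hom])
    then show ?thesis using fin by (simp add: sum.inter_filter)
  qed
  have "hdegs degB degM (sum F I) \<subseteq> g ` I"
    using hdegs_sum_subset[of degB degM F I] hdegs_subset_if_hom_homog[OF hom] by blast
  then have "hext degB degM op (sum F I) = (\<Sum>n\<in>g ` I. op n (hpart degB degM n (sum F I)))"
    by (rule hext_superset[OF finite_imageI[OF fin]]) (rule additive.zero[OF op])
  also have "\<dots> = (\<Sum>n\<in>g ` I. \<Sum>i\<in>{i \<in> I. g i = n}. op (g i) (F i))"
    by (simp add: hpart additive.sum[OF op])
  also have "\<dots> = (\<Sum>i\<in>I. op (g i) (F i))"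
    by (rule sum.group) (use fin in auto)
  finally show ?thesis .
qed

lemma hext_hom_homog:
  assumes "\<And>n. additive (op n)" "hom_homog degB degM n phi"
  shows "hext degB degM op phi = op n phi"
  using hext_sum[of op "{n}" degB degM "\<lambda>n. n" "\<lambda>_. phi"] assms by simp

lemma hext_add:
  assumes op: "\<And>n. additive (op n)"
    and phi: "hom_gr degB degM phi" and psi: "hom_gr degB degM psi"
  shows "hext degB degM op (phi + psi) = hext degB degM op phi + hext degB degM op psi"
proof -
  let ?S = "hdegs degB degM phi \<union> hdegs degB degM psi"
  have fin: "finite ?S" using phi psi by (simp add: hom_gr_def)
  have op0: "op n 0 = 0" for n by (rule additive.zero[OF op])
  have "hext degB degM op (phi + psi) = (\<Sum>n\<in>?S. op n (hpart degB degM n (phi + psi)))"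
    by (rule hext_superset[where op = op, OF fin hdegs_add_subset op0])
  also have "\<dots> = (\<Sum>n\<in>?S. op n (hpart degB degM n phi)) + (\<Sum>n\<in>?S. op n (hpart degB degM n psi))"
    by (simp add: hpart_add additive.add[OF op] sum.distrib)
  also have "\<dots> = hext degB degM op phi + hext degB degM op psi"
    by (simp add: hext_superset[where op = op, OF fin _ op0])
  finally show ?thesis .
qed

lemma hext_hsc:
  assumes op: "\<And>n. additive (op n)" and op_hsc: "\<And>n phi. op n (hsc c phi) = hsc c (op n phi)"
    and phi: "hom_gr degB degM phi"
  shows "hext degB degM op (hsc c phi) = hsc c (hext degB degM op phi)"
proof -
  let ?S = "hdegs degB degM phi"
  have fin: "finite ?S" using phi by (simp add: hom_gr_def)
  have op0: "op n 0 = 0" for n by (rule additive.zero[OF op])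
  have "hext degB degM op (hsc c phi) = (\<Sum>n\<in>?S. op n (hpart degB degM n (hsc c phi)))"
    by (rule hext_superset[where op = op, OF fin hdegs_hsc_subset op0])
  also have "\<dots> = hsc c (\<Sum>n\<in>?S. op n (hpart degB degM n phi))"
    by (simp add: hpart_hsc op_hsc hsc.sum)
  also have "\<dots> = hsc c (hext degB degM op phi)"
    using fin op0 by (simp add: hext_superset)
  finally show ?thesis .
qed

lemma hext_op_zero: "hext degB degM (\<lambda>n x. 0) phi = 0"
  by (simp add: hext_def fun_eq_iff)

lemma hext_op_add:
  "hext degB degM (\<lambda>n x. op n x + op' n x) phi = hext degB degM op phi + hext degB degM op' phi"
  by (simp add: hext_def fun_eq_iff sum.distrib)

lemma hext_op_diff:
  "hext degB degM (\<lambda>n x. op n x - op' n x) phi = hext degB degM op phi - hext degB degM op' phi"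
  by (simp add: hext_def fun_eq_iff sum_subtractf)

lemma hext_op_hsc: "hext degB degM (\<lambda>n x. hsc c (op n x)) phi = hsc c (hext degB degM op phi)"
  by (simp add: hext_def fun_eq_iff hsc_def sc.sum)

lemma hom_gr_hext:
  assumes op0: "\<And>n. op n 0 = 0"
    and deg: "\<And>n x. hom_homog degB degM n x \<Longrightarrow> hom_homog degB degN (g n) (op n x)"
    and phi: "hom_gr degB degM phi"
  shows "hom_gr degB degN (hext degB degM op phi)"
proof -
  have fin: "finite (hdegs degB degM phi)" using phi by (simp add: hom_gr_def)
  show ?thesis
    unfolding hext_superset[where op = op, OF fin order_refl op0]
    by (rule hom_gr_sum[OF fin]) (rule hom_gr_if_hom_homog[OF deg[OF hom_homog_hpart]])
qed

lemma hext_hext: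
  assumes op: "\<And>n. additive (op n)" and op': "\<And>n. additive (op' n)"
    and deg: "\<And>n x. hom_homog degB degM n x \<Longrightarrow> hom_homog degB degN (g n) (op n x)"
    and phi: "hom_gr degB degM phi"
  shows "hext degB degN op' (hext degB degM op phi) = hext degB degM (\<lambda>n x. op' (g n) (op n x)) phi"
proof -
  let ?S = "hdegs degB degM phi"
  have fin: "finite ?S" using phi by (simp add: hom_gr_def)
  have "hext degB degN op' (hext degB degM op phi)
      = hext degB degN op' (\<Sum>n\<in>?S. op n (hpart degB degM n phi))"
    by (simp add: hext_superset[OF fin order_refl] additive.zero[OF op])
  also have "\<dots> = (\<Sum>n\<in>?S. op' (g n) (op n (hpart degB degM n phi)))"
    by (rule hext_sum[OF op' fin]) (rule deg[OF hom_homog_hpart])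
  also have "\<dots> = hext degB degM (\<lambda>n x. op' (g n) (op n x)) phi"
    by (simp add: hext_superset[OF fin order_refl] additive.zero[OF op] additive.zero[OF op'])
  finally show ?thesis .
qed

definition dual_part :: "('b \<Rightarrow> int) \<Rightarrow> int \<Rightarrow> ('b \<Rightarrow> 'k::field) \<Rightarrow> ('b \<Rightarrow> 'k)" where
  "dual_part degB m beta = (\<lambda>j. if degB j = - m then beta j else 0)"

definition dual_degs :: "('b \<Rightarrow> int) \<Rightarrow> ('b \<Rightarrow> 'k::field) \<Rightarrow> int set" where
  "dual_degs degB beta = (\<lambda>j. - degB j) ` {j. beta j \<noteq> 0}"

lemma dual_homog_dual_part: "dual_homog degB m (dual_part degB m beta)"
  by (simp add: dual_homog_def dual_part_def)

lemma finite_dual_degs: "dual_el degB beta \<Longrightarrow> finite (dual_degs degB beta)"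
proof -
  assume "dual_el degB beta"
  then have "finite (uminus ` {degB j | j. beta j \<noteq> 0})" unfolding dual_el_def by simp
  moreover have "dual_degs degB beta = uminus ` {degB j | j. beta j \<noteq> 0}"
    unfolding dual_degs_def by auto
  ultimately show ?thesis by simp
qed

lemma sum_dual_part: "dual_el degB beta \<Longrightarrow> (\<Sum>m\<in>dual_degs degB beta. dual_part degB m beta) = beta"
proof
  fix j assume fin: "dual_el degB beta"
  have "(\<Sum>m\<in>dual_degs degB beta. dual_part degB m beta) j
      = (\<Sum>m\<in>dual_degs degB beta. if m = - degB j then beta j else 0)"
    by (simp add: sum_apply dual_part_def) (rule sum.cong, auto)
  also have "\<dots> = beta j"
    using finite_dual_degs[OF fin] by (auto simp: dual_degs_def)
  finally show "(\<Sum>m\<in>dual_degs degB beta. dual_part degB m beta) j = beta j" .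
qed

section \<open>The cofree correspondence\<close>

locale dg_coalg =
  fixes degB :: "'b \<Rightarrow> int"
    and Delta :: "'b \<Rightarrow> ('b \<times> 'b \<Rightarrow>\<^sub>0 'k::field)"
    and eps :: "'b \<Rightarrow> 'k"
    and d :: "'b \<Rightarrow> ('b \<Rightarrow>\<^sub>0 'k)"
  assumes dg_coalgebra: "dg_coalgebra degB Delta eps d"
begin

lemma degB_Delta: "(p, q) \<in> Poly_Mapping.keys (Delta j) \<Longrightarrow> degB p + degB q = degB j"
  using dg_coalgebra unfolding dg_coalgebra_def by fast

lemma degB_eps: "eps j \<noteq> 0 \<Longrightarrow> degB j = 0"
  using dg_coalgebra unfolding dg_coalgebra_def by fast

lemma degB_d: "p \<in> Poly_Mapping.keys (d j) \<Longrightarrow> degB p = degB j + 1"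
  using dg_coalgebra unfolding dg_coalgebra_def by fast

lemma lin_d_d: "lin d (d j) = 0"
  using dg_coalgebra unfolding dg_coalgebra_def by fast

lemma lin_coassoc:
  "lin (\<lambda>(p, q). lin (\<lambda>(a, b). H (a, b, q)) (Delta p)) (Delta j)
   = lin (\<lambda>(a, r). lin (\<lambda>(b, c). H (a, b, c)) (Delta r)) (Delta j)"
proof -
  have "lin (\<lambda>(p, q). lin (\<lambda>(a, b). bvec (a, (b, q))) (Delta p)) (Delta j)
      = lin (\<lambda>(p, q). ltens p (Delta q)) (Delta j)"
    using dg_coalgebra unfolding dg_coalgebra_def by blast
  then have "lin H (lin (\<lambda>(p, q). lin (\<lambda>(a, b). bvec (a, (b, q))) (Delta p)) (Delta j))
      = lin H (lin (\<lambda>(p, q). ltens p (Delta q)) (Delta j))" by simp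
  then show ?thesis
    by (simp add: lin_lin lin_ltens case_prod_unfold)
qed

lemma lin_counit_left: "lin (\<lambda>(p, q). sc (eps p) (F q)) (Delta j) = F j"
proof -
  have "lin (\<lambda>(p, q). sc (eps p) (bvec q)) (Delta j) = bvec j"
    using dg_coalgebra unfolding dg_coalgebra_def by blast
  then have "lin F (lin (\<lambda>(p, q). sc (eps p) (bvec q)) (Delta j)) = lin F (bvec j)" by simp
  then show ?thesis by (simp add: lin_lin lin_sc case_prod_unfold)
qed

lemma lin_counit_right: "lin (\<lambda>(p, q). sc (eps q) (F p)) (Delta j) = F j"
proof -
  have "lin (\<lambda>(p, q). sc (eps q) (bvec p)) (Delta j) = bvec j"
    using dg_coalgebra unfolding dg_coalgebra_def by blast
  then have "lin F (lin (\<lambda>(p, q). sc (eps q) (bvec p)) (Delta j)) = lin F (bvec j)" by simp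
  then show ?thesis by (simp add: lin_lin lin_sc case_prod_unfold)
qed

lemma lin_coderivation:
  "lin (\<lambda>i. lin G (Delta i)) (d j)
   = lin (\<lambda>(p, q). lin (\<lambda>p'. G (p', q)) (d p) + sc (ksign (degB p)) (lin (\<lambda>q'. G (p, q')) (d q)))
       (Delta j)"
proof -
  have "lin Delta (d j)
      = lin (\<lambda>(p, q). rtens (d p) q + sc (ksign (degB p)) (ltens p (d q))) (Delta j)"
    using dg_coalgebra unfolding dg_coalgebra_def by blast
  then have "lin G (lin Delta (d j))
      = lin G (lin (\<lambda>(p, q). rtens (d p) q + sc (ksign (degB p)) (ltens p (d q))) (Delta j))"
    by simp
  then show ?thesis
    by (simp add: lin_lin lin_sc lin_add lin_ltens lin_rtens case_prod_unfold)
qed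

text \<open>The degree n comodule map B \<rightarrow> B \<otimes> M cofreely generated by a degree n map
  \<phi> : B \<rightarrow> M, namely (id \<otimes> \<phi>) \<circ> \<Delta> with the Koszul sign.\<close>
definition cofree :: "int \<Rightarrow> ('b \<Rightarrow> ('m \<Rightarrow>\<^sub>0 'k)) \<Rightarrow> 'b \<Rightarrow> ('b \<times> 'm \<Rightarrow>\<^sub>0 'k)" where
  "cofree n phi j = lin (\<lambda>(p, q). sc (ksign (degB p * n)) (ltens p (phi q))) (Delta j)"

definition eps_id :: "('b \<times> 'm \<Rightarrow>\<^sub>0 'k) \<Rightarrow> ('m \<Rightarrow>\<^sub>0 'k)" where
  "eps_id w = lin (\<lambda>(p, z). sc (eps p) (bvec z)) w"

definition id_eps_id :: "('b \<times> ('b \<times> 'm) \<Rightarrow>\<^sub>0 'k) \<Rightarrow> ('b \<times> 'm \<Rightarrow>\<^sub>0 'k)" where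
  "id_eps_id w = lin (\<lambda>(a, b, x). sc (eps b) (bvec (a, x))) w"

definition comod_map :: "int \<Rightarrow> ('b \<Rightarrow> ('b \<times> 'm \<Rightarrow>\<^sub>0 'k)) \<Rightarrow> bool" where
  "comod_map n G \<longleftrightarrow>
     (\<forall>j. lin (coact Delta) (G j) = lin (\<lambda>(p, q). sc (ksign (n * degB p)) (ltens p (G q))) (Delta j))"

lemma comp_eq_eps_id: "comp eps f = (\<lambda>y. eps_id (f y))"
  by (simp add: comp_def eps_id_def fun_eq_iff)

lemma eps_id_lin: "eps_id (lin f v) = lin (\<lambda>a. eps_id (f a)) v"
  by (simp add: eps_id_def lin_lin)

lemma eps_id_diff: "eps_id (v - w) = eps_id v - eps_id w"
  by (simp add: eps_id_def lin.diff)

lemma eps_id_uminus: "eps_id (- w) = - eps_id w"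
  by (simp add: eps_id_def lin.minus)

lemma eps_id_sc: "eps_id (sc c w) = sc c (eps_id w)"
  by (simp add: eps_id_def lin_sc)

lemma eps_id_ltens: "eps_id (ltens p w) = sc (eps p) w"
  by (simp add: eps_id_def lin_ltens lin_fun_sc)

lemma ksign_mult_eps: "ksign (degB p * n) * eps p = eps p"
  by (cases "eps p = 0") (auto dest: degB_eps)

lemma eps_id_cofree: "eps_id (cofree n phi j) = phi j"
  using lin_counit_left[of phi j]
  by (simp add: cofree_def eps_id_lin eps_id_sc eps_id_ltens ksign_mult_eps case_prod_unfold)

lemma id_eps_id_lin: "id_eps_id (lin f v) = lin (\<lambda>a. id_eps_id (f a)) v"
  by (simp add: id_eps_id_def lin_lin)

lemma id_eps_id_sc: "id_eps_id (sc c w) = sc c (id_eps_id w)"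
  by (simp add: id_eps_id_def lin_sc)

lemma id_eps_id_coact: "id_eps_id (coact Delta y) = bvec y"
proof (cases y)
  case (Pair i x)
  have "id_eps_id (coact Delta (i, x)) = lin (\<lambda>(p, q). sc (eps q) (bvec (p, x))) (Delta i)"
    by (simp add: id_eps_id_def coact_def lin_lin case_prod_unfold)
  also have "\<dots> = bvec (i, x)" by (rule lin_counit_right)
  finally show ?thesis using Pair by simp
qed

lemma id_eps_id_ltens: "id_eps_id (ltens p w) = ltens p (eps_id w)"
  by (simp add: id_eps_id_def eps_id_def lin_ltens ltens_lin lin_fun_sc ltens_sc case_prod_unfold)
     (simp add: ltens_def)

text \<open>A comodule map is determined by its corestriction: apply id \<otimes> \<epsilon> \<otimes> id to the
  comodule-map equation.\<close>
lemma comod_map_eq_cofree: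
  assumes "comod_map n G"
  shows "G = cofree n (\<lambda>i. eps_id (G i))"
proof
  fix j
  have "id_eps_id (lin (coact Delta) (G j)) = lin (\<lambda>y. id_eps_id (coact Delta y)) (G j)"
    by (rule id_eps_id_lin)
  then have "id_eps_id (lin (coact Delta) (G j)) = G j"
    by (simp add: id_eps_id_coact)
  moreover have "id_eps_id (lin (\<lambda>(p, q). sc (ksign (n * degB p)) (ltens p (G q))) (Delta j))
      = cofree n (\<lambda>i. eps_id (G i)) j"
    by (simp add: cofree_def id_eps_id_lin id_eps_id_sc id_eps_id_ltens case_prod_unfold mult.commute)
  ultimately show "G j = cofree n (\<lambda>i. eps_id (G i)) j"
    using assms unfolding comod_map_def by metis
qed

lemma lin_coact_ltens:
  "lin (coact Delta) (ltens p w) = lin (\<lambda>(a, b). ltens a (ltens b w)) (Delta p)"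
proof -
  have "lin (coact Delta) (ltens p w) = lin (\<lambda>z. lin (\<lambda>(a, b). bvec (a, (b, z))) (Delta p)) w"
    by (simp add: lin_ltens coact_def)
  also have "\<dots> = lin (\<lambda>(a, b). lin (\<lambda>z. bvec (a, (b, z))) w) (Delta p)"
    by (simp add: case_prod_unfold lin_swap[where H = "\<lambda>z x. bvec (fst x, snd x, z)"])
  also have "\<dots> = lin (\<lambda>(a, b). ltens a (ltens b w)) (Delta p)"
    by (simp add: ltens_def lin_lin)
  finally show ?thesis .
qed

lemma comod_map_cofree: "comod_map n (cofree n phi)"
  unfolding comod_map_def
proof
  fix j
  let ?H = "\<lambda>(a, b, c). sc (ksign (degB a * n) * ksign (degB b * n)) (ltens a (ltens b (phi c)))"
  have "lin (coact Delta) (cofree n phi j)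
      = lin (\<lambda>(p, q). lin (\<lambda>(a, b). sc (ksign (degB p * n)) (ltens a (ltens b (phi q)))) (Delta p)) (Delta j)"
    by (simp add: cofree_def lin_lin lin_sc lin_coact_ltens case_prod_unfold lin_fun_sc)
  also have "\<dots> = lin (\<lambda>(p, q). lin (\<lambda>(a, b). ?H (a, b, q)) (Delta p)) (Delta j)"
  proof (rule lin_cong_pair, unfold prod.case, rule lin_cong_pair, unfold prod.case)
    fix p q a b assume "(a, b) \<in> Poly_Mapping.keys (Delta p)"
    then show "sc (ksign (degB p * n)) (ltens a (ltens b (phi q)))
        = sc (ksign (degB a * n) * ksign (degB b * n)) (ltens a (ltens b (phi q)))"
      by (simp add: degB_Delta[symmetric] distrib_right ksign_add)
  qed
  also have "\<dots> = lin (\<lambda>(a, r). lin (\<lambda>(b, c). ?H (a, b, c)) (Delta r)) (Delta j)"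
    by (rule lin_coassoc)
  also have "\<dots> = lin (\<lambda>(p, q). sc (ksign (n * degB p)) (ltens p (cofree n phi q))) (Delta j)"
    by (simp add: cofree_def ltens_lin ltens_sc lin_fun_sc[symmetric] case_prod_unfold mult.commute)
  finally show "lin (coact Delta) (cofree n phi j)
      = lin (\<lambda>(p, q). sc (ksign (n * degB p)) (ltens p (cofree n phi q))) (Delta j)" .
qed

lemma comod_map_comp:
  assumes f: "comod_hom degB Delta degM degN m f" and G: "comod_map n G"
  shows "comod_map (n + m) (\<lambda>j. lin f (G j))"
  unfolding comod_map_def
proof
  fix j
  have fc: "lin (coact Delta) (f y)
      = lin (\<lambda>(p, z). sc (ksign (m * degB p)) (ltens p (f z))) (coact Delta y)" for y
    using f unfolding comod_hom_def by blast
  have "lin (coact Delta) (lin f (G j))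
      = lin (\<lambda>(p, z). sc (ksign (m * degB p)) (ltens p (f z))) (lin (coact Delta) (G j))"
    by (simp add: fc lin_lin)
  also have "\<dots> = lin (\<lambda>(p, q). sc (ksign (n * degB p))
                    (lin (\<lambda>z. sc (ksign (m * degB p)) (ltens p (f z))) (G q))) (Delta j)"
    using G unfolding comod_map_def by (simp add: lin_lin lin_sc lin_ltens case_prod_unfold)
  also have "\<dots> = lin (\<lambda>(p, q). sc (ksign ((n + m) * degB p)) (ltens p (lin f (G q)))) (Delta j)"
    by (simp add: ltens_lin lin_fun_sc[symmetric] distrib_right ksign_add case_prod_unfold)
  finally show "lin (coact Delta) (lin f (G j))
      = lin (\<lambda>(p, q). sc (ksign ((n + m) * degB p)) (ltens p (lin f (G q)))) (Delta j)" .
qed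

lemma lin_coact_comod_map:
  "comod_map n G
     \<Longrightarrow> lin (coact Delta) (G j) = lin (\<lambda>(p, q). sc (ksign (n * degB p)) (ltens p (G q))) (Delta j)"
  unfolding comod_map_def by blast

lemma lin_coact_lin_dM:
  assumes M: "free_dg_comodule degB Delta d degM dM" and G: "comod_map n G"
  shows "lin (coact Delta) (lin dM (G j))
      = lin (\<lambda>(p, q). sc (ksign (n * degB p)) (lin (\<lambda>p'. ltens p' (G q)) (d p))
          + sc (ksign (n * degB p) * ksign (degB p)) (ltens p (lin dM (G q)))) (Delta j)"
proof -
  have "lin (coact Delta) (dM y)
      = lin (\<lambda>(p, z). rtens (d p) z + sc (ksign (degB p)) (ltens p (dM z))) (coact Delta y)" for y
    using M unfolding free_dg_comodule_def by blast
  then have "lin (coact Delta) (lin dM (G j))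
      = lin (\<lambda>(p, z). rtens (d p) z + sc (ksign (degB p)) (ltens p (dM z))) (lin (coact Delta) (G j))"
    by (simp add: lin_lin)
  also have "\<dots> = lin (\<lambda>(p, q). sc (ksign (n * degB p)) (lin (\<lambda>z. rtens (d p) z) (G q))
      + sc (ksign (n * degB p) * ksign (degB p)) (ltens p (lin dM (G q)))) (Delta j)"
    by (simp add: lin_coact_comod_map[OF G] lin_lin lin_sc lin_ltens case_prod_unfold lin_fun_add
        sc_add lin_fun_sc ltens_lin)
  finally show ?thesis by (simp add: lin_rtens_ltens)
qed

lemma lin_coact_lin_d:
  assumes G: "comod_map n G"
  shows "lin (coact Delta) (lin G (d j))
      = lin (\<lambda>(p, q). sc (ksign (n * degB p) * ksign n) (lin (\<lambda>p'. ltens p' (G q)) (d p))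
          + sc (ksign (degB p) * ksign (n * degB p)) (ltens p (lin G (d q)))) (Delta j)"
proof -
  have "lin (coact Delta) (lin G (d j))
      = lin (\<lambda>i. lin (\<lambda>(p, q). sc (ksign (n * degB p)) (ltens p (G q))) (Delta i)) (d j)"
    by (simp add: lin_lin lin_coact_comod_map[OF G])
  also have "\<dots> = lin (\<lambda>(p, q). lin (\<lambda>p'. sc (ksign (n * degB p')) (ltens p' (G q))) (d p)
      + sc (ksign (degB p)) (lin (\<lambda>q'. sc (ksign (n * degB p)) (ltens p (G q'))) (d q))) (Delta j)"
    by (simp add: lin_coderivation case_prod_unfold)
  also have "\<dots> = lin (\<lambda>(p, q). lin (\<lambda>p'. sc (ksign (n * degB p) * ksign n) (ltens p' (G q))) (d p)
      + sc (ksign (degB p)) (lin (\<lambda>q'. sc (ksign (n * degB p)) (ltens p (G q'))) (d q))) (Delta j)"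
    by (simp add: degB_d distrib_left ksign_add cong: lin_cong_keys)
  finally show ?thesis by (simp add: ltens_lin lin_fun_sc[symmetric] mult_ac)
qed

lemma comod_map_commutator:
  assumes M: "free_dg_comodule degB Delta d degM dM" and G: "comod_map n G"
  shows "comod_map (n + 1) (\<lambda>j. lin dM (G j) - sc (ksign n) (lin G (d j)))"
  unfolding comod_map_def
proof
  fix j
  show "lin (coact Delta) (lin dM (G j) - sc (ksign n) (lin G (d j)))
      = lin (\<lambda>(p, q). sc (ksign ((n + 1) * degB p)) (ltens p (lin dM (G q) - sc (ksign n) (lin G (d q)))))
          (Delta j)"
    unfolding lin.diff lin_sc lin_coact_lin_dM[OF M G] lin_coact_lin_d[OF G]
    unfolding lin_fun_sc[symmetric] lin_fun_diff[symmetric]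
    by (rule lin_cong_pair)
       (simp add: sc_add sc.diff ltens.diff ltens_sc ltens_lin ring_distribs ksign_add mult_ac
         flip: lin_fun_sc)
qed

lemma lin_comp_eq_eps_id: "lin (comp eps f) w = eps_id (lin f w)"
  by (simp add: comp_eq_eps_id eps_id_lin)

lemma fvee_h_eq_eps_id_cofree:
  "fvee_h degB Delta eps f n phi j = eps_id (lin f (cofree n phi j))"
  by (simp add: fvee_h_def cofree_def lin_comp_eq_eps_id lin_lin lin_sc eps_id_lin eps_id_sc
      case_prod_unfold)

lemma dvee_h_eq_eps_id_cofree:
  "dvee_h degB Delta eps d dM n phi j
     = eps_id (lin dM (cofree n phi j)) - sc (ksign n) (lin phi (d j))"
  by (simp add: dvee_h_def cofree_def lin_comp_eq_eps_id lin_lin lin_sc eps_id_lin eps_id_sc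
      case_prod_unfold)

lemma cofree_fvee_h:
  assumes "comod_hom degB Delta degM degN m f"
  shows "cofree (n + m) (fvee_h degB Delta eps f n phi) = (\<lambda>j. lin f (cofree n phi j))"
  using comod_map_eq_cofree[OF comod_map_comp[OF assms comod_map_cofree]]
  by (simp add: fvee_h_eq_eps_id_cofree[abs_def])

lemma cofree_dvee_h:
  assumes "free_dg_comodule degB Delta d degM dM"
  shows "cofree (n + 1) (dvee_h degB Delta eps d dM n phi)
       = (\<lambda>j. lin dM (cofree n phi j) - sc (ksign n) (lin (cofree n phi) (d j)))"
  using comod_map_eq_cofree[OF comod_map_commutator[OF assms comod_map_cofree]]
  by (simp add: dvee_h_eq_eps_id_cofree[abs_def] eps_id_diff eps_id_sc eps_id_lin eps_id_cofree)

lemma lin_dM_dM: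
  assumes "free_dg_comodule degB Delta d degM dM"
  shows "lin dM (lin dM w) = 0"
proof -
  have "lin dM (dM y) = 0" for y
    using assms unfolding free_dg_comodule_def by blast
  then show ?thesis by (simp add: lin_lin)
qed

lemma dvee_h_dvee_h:
  assumes M: "free_dg_comodule degB Delta d degM dM"
  shows "dvee_h degB Delta eps d dM (n + 1) (dvee_h degB Delta eps d dM n phi) = 0"
proof
  fix j
  let ?X = "eps_id (lin dM (lin (cofree n phi) (d j)))"
  have lin_dvee_h_d: "lin (dvee_h degB Delta eps d dM n phi) (d j) = ?X"
  proof -
    have "lin (dvee_h degB Delta eps d dM n phi) (d j)
        = lin (\<lambda>i. eps_id (lin dM (cofree n phi i)) - sc (ksign n) (lin phi (d i))) (d j)"
      by (rule lin_cong) (simp add: dvee_h_eq_eps_id_cofree)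
    moreover have "lin (\<lambda>i. lin phi (d i)) (d j) = 0"
      using lin_lin[of phi d "d j"] by (simp add: lin_d_d)
    ultimately show ?thesis
      by (simp add: lin_fun_diff lin_fun_sc eps_id_lin lin_lin)
  qed
  have "eps_id (lin dM (cofree (n + 1) (dvee_h degB Delta eps d dM n phi) j)) = - sc (ksign n) ?X"
    by (simp add: cofree_dvee_h[OF M] lin.diff lin_sc lin_dM_dM[OF M] eps_id_sc eps_id_uminus)
  with lin_dvee_h_d show "dvee_h degB Delta eps d dM (n + 1) (dvee_h degB Delta eps d dM n phi) j = 0 j"
    by (simp add: dvee_h_eq_eps_id_cofree[of dM "n + 1" "dvee_h degB Delta eps d dM n phi"]
        ksign_plus_1 sc_minus_one[symmetric])
qed

lemma fvee_h_comp:
  assumes "comod_hom degB Delta degM degN n f"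
  shows "fvee_h degB Delta eps (\<lambda>y. lin g (f y))
       = (\<lambda>k phi. fvee_h degB Delta eps g (k + n) (fvee_h degB Delta eps f k phi))"
  by (simp add: fun_eq_iff fvee_h_eq_eps_id_cofree cofree_fvee_h[OF assms] lin_lin)

lemma fvee_h_bvec: "fvee_h degB Delta eps bvec = (\<lambda>k phi. phi)"
  by (simp add: fun_eq_iff fvee_h_eq_eps_id_cofree eps_id_cofree)

lemma fvee_h_commutator:
  assumes f: "comod_hom degB Delta degM degN n f"
    and M: "free_dg_comodule degB Delta d degM dM"
  shows "fvee_h degB Delta eps (\<lambda>y. lin dN (f y) - sc (ksign n) (lin f (dM y)))
       = (\<lambda>k phi. dvee_h degB Delta eps d dN (k + n) (fvee_h degB Delta eps f k phi)
          - hsc (ksign n) (fvee_h degB Delta eps f (k + 1) (dvee_h degB Delta eps d dM k phi)))"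
proof (intro ext)
  fix k phi j
  have "lin (fvee_h degB Delta eps f k phi) (d j) = lin (\<lambda>i. eps_id (lin f (cofree k phi i))) (d j)"
    by (rule lin_cong) (simp add: fvee_h_eq_eps_id_cofree)
  then have "lin (fvee_h degB Delta eps f k phi) (d j) = eps_id (lin f (lin (cofree k phi) (d j)))"
    by (simp add: eps_id_lin lin_lin)
  then show "fvee_h degB Delta eps (\<lambda>y. lin dN (f y) - sc (ksign n) (lin f (dM y))) k phi j
      = (dvee_h degB Delta eps d dN (k + n) (fvee_h degB Delta eps f k phi)
          - hsc (ksign n) (fvee_h degB Delta eps f (k + 1) (dvee_h degB Delta eps d dM k phi))) j"
    by (simp add: fvee_h_eq_eps_id_cofree dvee_h_eq_eps_id_cofree[of dN "k + n"] hsc_def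
        cofree_fvee_h[OF f] cofree_dvee_h[OF M] lin_fun_diff lin_fun_sc lin.diff lin_sc
        eps_id_diff eps_id_sc sc.diff ksign_add lin_lin mult.commute)
qed

end

lemma fvee_h_add:
  "fvee_h degB Delta eps f n (phi + psi) = fvee_h degB Delta eps f n phi + fvee_h degB Delta eps f n psi"
  by (rule ext) (simp add: fvee_h_def ltens.add lin_add sc_add lin_fun_add case_prod_unfold)

lemma additive_fvee_h: "additive (fvee_h degB Delta eps f n)"
  by unfold_locales (rule fvee_h_add)

lemma fvee_h_hsc: "fvee_h degB Delta eps f n (hsc c phi) = hsc c (fvee_h degB Delta eps f n phi)"
  by (rule ext)
     (simp add: fvee_h_def hsc_def ltens_sc lin_sc case_prod_unfold mult.commute flip: lin_fun_sc)

lemma fvee_h_fun_add: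
  "fvee_h degB Delta eps (\<lambda>y. f y + g y)
     = (\<lambda>n phi. fvee_h degB Delta eps f n phi + fvee_h degB Delta eps g n phi)"
  by (intro ext) (simp add: fvee_h_def comp_def lin_fun_add lin_add sc_add case_prod_unfold)

lemma fvee_h_fun_sc:
  "fvee_h degB Delta eps (\<lambda>y. sc c (f y)) = (\<lambda>n phi. hsc c (fvee_h degB Delta eps f n phi))"
proof -
  have "lin (comp eps (\<lambda>y. sc c (f y))) w = sc c (lin (comp eps f) w)" for w
    by (simp add: comp_def lin_sc lin_fun_sc)
  then show ?thesis
    by (intro ext) (simp add: fvee_h_def hsc_def case_prod_unfold mult.commute flip: lin_fun_sc)
qed

lemma dvee_h_eq_fvee_h:
  "dvee_h degB Delta eps d dM n phi = fvee_h degB Delta eps dM n phi - hsc (ksign n) (\<lambda>j. lin phi (d j))"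
  by (rule ext) (simp add: dvee_h_def fvee_h_def hsc_def)

lemma additive_dvee_h: "additive (dvee_h degB Delta eps d dM n)"
  by unfold_locales (simp add: dvee_h_eq_fvee_h fvee_h_add hsc_def lin_fun.add sc_add fun_eq_iff)

lemma dvee_h_hsc: "dvee_h degB Delta eps d dM n (hsc c phi) = hsc c (dvee_h degB Delta eps d dM n phi)"
  by (rule ext)
     (simp add: dvee_h_eq_fvee_h fvee_h_hsc[unfolded hsc_def] hsc_def lin_fun_sc sc.diff mult.commute)

context dg_coalg
begin

lemma homog_vec_lin_comp_ltens:
  assumes f: "\<forall>y. \<forall>z\<in>Poly_Mapping.keys (f y). tdeg degB degN z = tdeg degB degM y + n"
    and w: "homog_vec degM e w"
  shows "homog_vec degN (degB p + e + n) (lin (comp eps f) (ltens p w))"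
  unfolding lin_ltens comp_def
proof (rule homog_vec_lin, rule homog_vec_lin)
  fix z pz assume z: "z \<in> Poly_Mapping.keys w" and pz: "pz \<in> Poly_Mapping.keys (f (p, z))"
  obtain p' z' where pz': "pz = (p', z')" by fastforce
  have "degB p' + degN z' = degB p + degM z + n"
    using f pz pz' by (force simp: tdeg_def)
  moreover have "degM z = e" using w z by (simp add: homog_vec_def)
  ultimately have "eps p' \<noteq> 0 \<Longrightarrow> homog_vec degN (degB p + e + n) (bvec z')"
    using homog_vec_bvec[of degN z'] degB_eps[of p'] by simp
  then show "homog_vec degN (degB p + e + n) ((\<lambda>(p, z). sc (eps p) (bvec z)) pz)"
    using pz' by (cases "eps p' = 0") (auto intro: homog_vec_sc)
qed

lemma hom_homog_fvee_h:
  assumes f: "\<forall>y. \<forall>z\<in>Poly_Mapping.keys (f y). tdeg degB degN z = tdeg degB degM y + n"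
    and phi: "hom_homog degB degM k phi"
  shows "hom_homog degB degN (k + n) (fvee_h degB Delta eps f k phi)"
  unfolding hom_homog_iff fvee_h_def
proof (intro allI homog_vec_lin)
  fix j pq assume pq: "pq \<in> Poly_Mapping.keys (Delta j)"
  obtain p q where pq': "pq = (p, q)" by fastforce
  have "homog_vec degN (degB p + (degB q + k) + n) (lin (comp eps f) (ltens p (phi q)))"
    by (rule homog_vec_lin_comp_ltens[OF f]) (use phi in \<open>simp add: hom_homog_iff\<close>)
  moreover have "degB p + degB q = degB j" using degB_Delta pq pq' by simp
  ultimately show "homog_vec degN (degB j + (k + n))
      ((\<lambda>(p, q). sc (ksign (degB p * k)) (lin (comp eps f) (ltens p (phi q)))) pq)"
    using pq' by (simp add: homog_vec_sc algebra_simps)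
qed

lemma hom_homog_dvee_h:
  assumes M: "free_dg_comodule degB Delta d degM dM"
    and phi: "hom_homog degB degM k phi"
  shows "hom_homog degB degM (k + 1) (dvee_h degB Delta eps d dM k phi)"
proof -
  have "\<forall>y. \<forall>z\<in>Poly_Mapping.keys (dM y). tdeg degB degM z = tdeg degB degM y + 1"
    using M unfolding free_dg_comodule_def by blast
  from hom_homog_fvee_h[OF this phi]
  have fvee: "homog_vec degM (degB j + (k + 1)) (fvee_h degB Delta eps dM k phi j)" for j
    by (simp add: hom_homog_iff)
  have d: "homog_vec degM (degB j + (k + 1)) (lin phi (d j))" for j
  proof (rule homog_vec_lin)
    fix a assume "a \<in> Poly_Mapping.keys (d j)"
    then have "degB a + k = degB j + (k + 1)" by (simp add: degB_d)
    with phi show "homog_vec degM (degB j + (k + 1)) (phi a)"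
      by (metis hom_homog_iff)
  qed
  show ?thesis
    using fvee d by (simp add: hom_homog_iff dvee_h_eq_fvee_h hsc_def homog_vec_diff homog_vec_sc)
qed

end

section \<open>The right action of the dual algebra\<close>

lemma act_eq_lin:
  "act degB Delta phi beta j
     = lin (\<lambda>(p, q). sc (ksign (degB p * degB q) * beta q) (phi p)) (Delta j)"
  unfolding act_def lin_def by (rule sum.cong[OF refl]) (auto simp: mult.assoc)

lemma act_add_left: "act degB Delta (phi + psi) beta = act degB Delta phi beta + act degB Delta psi beta"
  by (rule ext) (simp add: act_eq_lin sc_add case_prod_unfold flip: lin_fun_add)

interpretation act_left: additive "\<lambda>phi. act degB Delta phi beta" for degB Delta beta
  by unfold_locales (rule act_add_left)

lemma act_add_right: "act degB Delta phi (beta + gamma) = act degB Delta phi beta + act degB Delta phi gamma"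
  by (rule ext) (simp add: act_eq_lin sc_add_left distrib_left case_prod_unfold flip: lin_fun_add)

interpretation act_right: additive "act degB Delta phi" for degB Delta phi
  by unfold_locales (rule act_add_right)

lemma act_hsc: "act degB Delta (hsc c phi) beta = hsc c (act degB Delta phi beta)"
  by (rule ext) (simp add: act_eq_lin hsc_def case_prod_unfold mult_ac flip: lin_fun_sc)

lemma act_scale_right: "act degB Delta phi (\<lambda>j. c * beta j) = hsc c (act degB Delta phi beta)"
  by (rule ext) (simp add: act_eq_lin hsc_def case_prod_unfold mult_ac flip: lin_fun_sc)

interpretation dual_d: additive "dual_d degB d" for degB d
  by unfold_locales (simp add: dual_d_def lfun_def fun_eq_iff sum.distrib distrib_left)

context dg_coalg
begin

lemma act_eps: "act degB Delta phi eps = phi"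
proof
  fix j
  have "act degB Delta phi eps j = lin (\<lambda>(p, q). sc (eps q) (phi p)) (Delta j)"
    unfolding act_eq_lin
  proof (rule lin_cong_pair, unfold prod.case)
    fix p q show "sc (ksign (degB p * degB q) * eps q) (phi p) = sc (eps q) (phi p)"
      using ksign_mult_eps[of q "degB p"] by (metis mult.commute)
  qed
  then show "act degB Delta phi eps j = phi j" by (simp add: lin_counit_right)
qed

lemma act_assoc:
  "act degB Delta (act degB Delta phi beta) gamma = act degB Delta phi (dual_mult degB Delta beta gamma)"
proof
  fix j
  let ?H = "\<lambda>(a, b, c). sc (ksign ((degB a + degB b) * degB c) * gamma c * (ksign (degB a * degB b) * beta b)) (phi a)"
  have "act degB Delta (act degB Delta phi beta) gamma j
      = lin (\<lambda>(p, q). lin (\<lambda>(a, b). sc (ksign (degB p * degB q) * gamma q * (ksign (degB a * degB b) * beta b))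
          (phi a)) (Delta p)) (Delta j)"
    by (simp add: act_eq_lin case_prod_unfold flip: lin_fun_sc)
  also have "\<dots> = lin (\<lambda>(p, q). lin (\<lambda>(a, b). ?H (a, b, q)) (Delta p)) (Delta j)"
    by (intro lin_cong_pair, unfold prod.case, intro lin_cong_pair) (simp add: degB_Delta)
  also have "\<dots> = lin (\<lambda>(a, r). lin (\<lambda>(b, c). ?H (a, b, c)) (Delta r)) (Delta j)"
    by (rule lin_coassoc)
  also have "\<dots> = lin (\<lambda>(a, r). lin (\<lambda>(b, c). sc (ksign (degB a * degB r)
          * (ksign (degB b * degB c) * beta b * gamma c)) (phi a)) (Delta r)) (Delta j)"
    by (intro lin_cong_pair, unfold prod.case, intro lin_cong_pair)
       (simp add: degB_Delta[symmetric] distrib_left distrib_right ksign_add mult_ac)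
  also have "\<dots> = act degB Delta phi (dual_mult degB Delta beta gamma) j"
  proof -
    have "dual_mult degB Delta beta gamma r
        = lfun (\<lambda>(b, c). ksign (degB b * degB c) * beta b * gamma c) (Delta r)" for r
      unfolding dual_mult_def lfun_def by (rule sum.cong[OF refl]) (auto simp: mult_ac)
    then show ?thesis by (simp add: act_eq_lin sc_mult_lfun case_prod_unfold)
  qed
  finally show "act degB Delta (act degB Delta phi beta) gamma j
      = act degB Delta phi (dual_mult degB Delta beta gamma) j" .
qed

lemma hom_homog_act:
  assumes phi: "hom_homog degB degM n phi" and beta: "dual_homog degB m beta"
  shows "hom_homog degB degM (n + m) (act degB Delta phi beta)"
  unfolding hom_homog_iff act_eq_lin
proof (intro allI homog_vec_lin)
  fix j pq assume pq: "pq \<in> Poly_Mapping.keys (Delta j)"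
  obtain p q where pq': "pq = (p, q)" by fastforce
  show "homog_vec degM (degB j + (n + m)) ((\<lambda>(p, q). sc (ksign (degB p * degB q) * beta q) (phi p)) pq)"
  proof (cases "beta q = 0")
    case False
    then have "degB q = - m" using beta by (simp add: dual_homog_def)
    moreover have "degB p + degB q = degB j" using degB_Delta pq pq' by simp
    moreover have "homog_vec degM (degB p + n) (phi p)" using phi by (simp add: hom_homog_iff)
    ultimately show ?thesis using pq' by (simp add: homog_vec_sc algebra_simps)
  qed (use pq' in simp)
qed

lemma act_eq_sum_homog:
  assumes "hom_gr degB degM phi" "dual_el degB beta"
  shows "act degB Delta phi beta
    = (\<Sum>(m, k)\<in>dual_degs degB beta \<times> hdegs degB degM phi.
         act degB Delta (hpart degB degM k phi) (dual_part degB m beta))"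
proof -
  have "act degB Delta phi beta
      = act degB Delta (\<Sum>k\<in>hdegs degB degM phi. hpart degB degM k phi)
          (\<Sum>m\<in>dual_degs degB beta. dual_part degB m beta)"
    using assms by (simp add: sum_hpart hom_gr_def sum_dual_part)
  then show ?thesis
    by (simp only: act_left.sum act_right.sum sum.cartesian_product)
qed

lemma hom_gr_act:
  assumes phi: "hom_gr degB degM phi" and beta: "dual_el degB beta"
  shows "hom_gr degB degM (act degB Delta phi beta)"
proof -
  have "finite (dual_degs degB beta \<times> hdegs degB degM phi)"
    using phi finite_dual_degs[OF beta] by (simp add: hom_gr_def)
  then show ?thesis
    unfolding act_eq_sum_homog[OF assms]
    by (intro hom_gr_sum)
       (auto intro!: hom_gr_if_hom_homog hom_homog_act hom_homog_hpart dual_homog_dual_part)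
qed

lemma fvee_h_act:
  assumes beta: "dual_homog degB m beta"
  shows "fvee_h degB Delta eps f (n + m) (act degB Delta phi beta)
       = act degB Delta (fvee_h degB Delta eps f n phi) beta"
proof
  fix j
  let ?C = "\<lambda>p a. lin (comp eps f) (ltens p (phi a))"
  let ?H = "\<lambda>(p, a, b). sc (ksign (degB p * (n + m)) * (ksign (degB a * degB b) * beta b)) (?C p a)"
  have sign: "ksign (degB p * (n + m)) * (ksign (degB a * degB b) * beta b)
      = ksign ((degB p + degB a) * degB b) * beta b * ksign (degB p * n)" for p a b
  proof (cases "beta b = 0")
    case False
    then have "degB b = - m" using beta by (simp add: dual_homog_def)
    then show ?thesis by (simp add: ksign_def even_add even_mult_iff algebra_simps)
  qed simp
  have "fvee_h degB Delta eps f (n + m) (act degB Delta phi beta) j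
      = lin (\<lambda>(p, q). lin (\<lambda>(a, b). ?H (p, a, b)) (Delta q)) (Delta j)"
    by (simp add: fvee_h_def act_eq_lin ltens_lin ltens_sc lin_lin lin_sc case_prod_unfold
        flip: lin_fun_sc)
  also have "\<dots> = lin (\<lambda>(r, b). lin (\<lambda>(p, a). ?H (p, a, b)) (Delta r)) (Delta j)"
    using lin_coassoc[of ?H j] by simp
  also have "\<dots> = lin (\<lambda>(r, b). lin (\<lambda>(p, a).
      sc (ksign (degB r * degB b) * beta b * ksign (degB p * n)) (?C p a)) (Delta r)) (Delta j)"
    by (intro lin_cong_pair, unfold prod.case, intro lin_cong_pair) (simp add: sign degB_Delta)
  also have "\<dots> = act degB Delta (fvee_h degB Delta eps f n phi) beta j"
    by (simp add: fvee_h_def act_eq_lin case_prod_unfold flip: lin_fun_sc)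
  finally show "fvee_h degB Delta eps f (n + m) (act degB Delta phi beta) j
      = act degB Delta (fvee_h degB Delta eps f n phi) beta j" .
qed

lemma ksign_act_d_left:
  assumes "dual_homog degB m beta" "p' \<in> Poly_Mapping.keys (d p)"
  shows "ksign m * (ksign (degB p' * degB q) * beta q) = ksign (degB p * degB q) * beta q"
proof (cases "beta q = 0")
  case False
  with assms have "degB q = - m" "degB p' = degB p + 1"
    by (simp_all add: dual_homog_def degB_d)
  then show ?thesis by (simp add: ksign_def even_add even_mult_iff algebra_simps)
qed simp

lemma ksign_act_d_right:
  assumes "dual_homog degB m beta" "q' \<in> Poly_Mapping.keys (d q)"
  shows "ksign m * (ksign (degB p) * (ksign (degB p * degB q') * beta q'))
       = - (ksign (degB p * degB q) * (ksign (degB q) * beta q'))"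
proof (cases "beta q' = 0")
  case False
  with assms have q': "degB q' = - m" by (simp add: dual_homog_def)
  with assms have q: "degB q = - m - 1" by (simp add: degB_d)
  show ?thesis unfolding q q' by (simp add: ksign_def even_add even_mult_iff algebra_simps)
qed simp

text \<open>The coderivation property of d, transposed: a Leibniz rule for precomposition with d.\<close>
lemma lin_act_d:
  assumes beta: "dual_homog degB m beta"
  shows "sc (ksign m) (lin (act degB Delta phi beta) (d j))
       = act degB Delta (\<lambda>r. lin phi (d r)) beta j - act degB Delta phi (dual_d degB d beta) j"
proof -
  have "lin (act degB Delta phi beta) (d j)
      = lin (\<lambda>i. lin (\<lambda>(p, q). sc (ksign (degB p * degB q) * beta q) (phi p)) (Delta i)) (d j)"
    by (rule lin_cong) (simp add: act_eq_lin)
  then have "sc (ksign m) (lin (act degB Delta phi beta) (d j))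
      = lin (\<lambda>(p, q). lin (\<lambda>p'. sc (ksign m * (ksign (degB p' * degB q) * beta q)) (phi p')) (d p)
          + lin (\<lambda>q'. sc (ksign m * (ksign (degB p) * (ksign (degB p * degB q') * beta q'))) (phi p)) (d q))
          (Delta j)"
    by (simp add: lin_coderivation sc_add case_prod_unfold flip: lin_fun_sc)
  also have "\<dots> = lin (\<lambda>(p, q). lin (\<lambda>p'. sc (ksign (degB p * degB q) * beta q) (phi p')) (d p)
          - lin (\<lambda>q'. sc (ksign (degB p * degB q) * (ksign (degB q) * beta q')) (phi p)) (d q)) (Delta j)"
    by (simp add: ksign_act_d_left[OF beta] ksign_act_d_right[OF beta] sc_uminus_left lin_fun_uminus
        cong: lin_cong_keys)
  also have "\<dots> = act degB Delta (\<lambda>r. lin phi (d r)) beta j - act degB Delta phi (dual_d degB d beta) j"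
    by (simp add: act_eq_lin dual_d_def mult_lfun sc_lfun lin_fun_diff case_prod_unfold mult_ac
        flip: lin_fun_sc)
  finally show ?thesis .
qed

lemma dvee_h_act:
  assumes beta: "dual_homog degB m beta"
  shows "dvee_h degB Delta eps d dM (n + m) (act degB Delta phi beta)
       = act degB Delta (dvee_h degB Delta eps d dM n phi) beta
         + hsc (ksign n) (act degB Delta phi (dual_d degB d beta))"
proof
  fix j
  have "sc (ksign (n + m)) (lin (act degB Delta phi beta) (d j))
      = sc (ksign n) (act degB Delta (\<lambda>r. lin phi (d r)) beta j - act degB Delta phi (dual_d degB d beta) j)"
    by (simp add: ksign_add lin_act_d[OF beta, symmetric])
  then show "dvee_h degB Delta eps d dM (n + m) (act degB Delta phi beta) j
      = (act degB Delta (dvee_h degB Delta eps d dM n phi) beta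
         + hsc (ksign n) (act degB Delta phi (dual_d degB d beta))) j"
    by (simp only: dvee_h_eq_fvee_h fvee_h_act[OF beta] act_left.diff act_hsc)
       (simp add: hsc_def sc.diff)
qed

end

section \<open>Extension to Hom_gr(B, M)\<close>

context dg_coalg
begin

lemma degree_comod_hom:
  "comod_hom degB Delta degM degN n f
     \<Longrightarrow> \<forall>y. \<forall>z\<in>Poly_Mapping.keys (f y). tdeg degB degN z = tdeg degB degM y + n"
  unfolding comod_hom_def by blast

lemma dvee_hom_homog:
  "hom_homog degB degM n phi \<Longrightarrow> dvee degB Delta eps d degM dM phi = dvee_h degB Delta eps d dM n phi"
  unfolding dvee_def by (rule hext_hom_homog[OF additive_dvee_h])

lemma fvee_hom_homog:
  "hom_homog degB degM n phi \<Longrightarrow> fvee degB Delta eps degM f phi = fvee_h degB Delta eps f n phi"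
  unfolding fvee_def by (rule hext_hom_homog[OF additive_fvee_h])

context
  fixes degM :: "'m \<Rightarrow> int" and dM
  assumes M: "free_dg_comodule degB Delta d degM dM"
begin

lemma hom_gr_dvee: "hom_gr degB degM phi \<Longrightarrow> hom_gr degB degM (dvee degB Delta eps d degM dM phi)"
  unfolding dvee_def
  by (rule hom_gr_hext[where g = "\<lambda>k. k + 1"])
     (simp_all add: additive.zero[OF additive_dvee_h] hom_homog_dvee_h[OF M])

lemma hom_homog_dvee:
  "hom_homog degB degM n phi \<Longrightarrow> hom_homog degB degM (n + 1) (dvee degB Delta eps d degM dM phi)"
  by (simp add: dvee_hom_homog hom_homog_dvee_h[OF M])

lemma dvee_add:
  "hom_gr degB degM phi \<Longrightarrow> hom_gr degB degM psi
     \<Longrightarrow> dvee degB Delta eps d degM dM (phi + psi)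
         = dvee degB Delta eps d degM dM phi + dvee degB Delta eps d degM dM psi"
  unfolding dvee_def by (rule hext_add[OF additive_dvee_h])

lemma dvee_hsc:
  "hom_gr degB degM phi
     \<Longrightarrow> dvee degB Delta eps d degM dM (hsc c phi) = hsc c (dvee degB Delta eps d degM dM phi)"
  unfolding dvee_def by (rule hext_hsc[OF additive_dvee_h dvee_h_hsc])

lemma dvee_dvee: "hom_gr degB degM phi \<Longrightarrow> dvee degB Delta eps d degM dM (dvee degB Delta eps d degM dM phi) = 0"
  unfolding dvee_def
  by (simp add: hext_hext[OF additive_dvee_h additive_dvee_h hom_homog_dvee_h[OF M]]
      dvee_h_dvee_h[OF M] hext_op_zero)

lemma dvee_act:
  assumes phi: "hom_homog degB degM n phi" and beta: "dual_el degB beta"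
  shows "dvee degB Delta eps d degM dM (act degB Delta phi beta)
       = act degB Delta (dvee degB Delta eps d degM dM phi) beta
         + hsc (ksign n) (act degB Delta phi (dual_d degB d beta))"
proof -
  let ?M = "dual_degs degB beta"
  have "act degB Delta phi beta = (\<Sum>m\<in>?M. act degB Delta phi (dual_part degB m beta))"
    by (simp add: sum_dual_part[OF beta] flip: act_right.sum)
  then have "dvee degB Delta eps d degM dM (act degB Delta phi beta)
      = hext degB degM (dvee_h degB Delta eps d dM) (\<Sum>m\<in>?M. act degB Delta phi (dual_part degB m beta))"
    by (simp add: dvee_def)
  also have "\<dots> = (\<Sum>m\<in>?M. dvee_h degB Delta eps d dM (n + m) (act degB Delta phi (dual_part degB m beta)))"
    by (rule hext_sum[OF additive_dvee_h finite_dual_degs[OF beta]])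
       (rule hom_homog_act[OF phi dual_homog_dual_part])
  also have "\<dots> = (\<Sum>m\<in>?M. act degB Delta (dvee_h degB Delta eps d dM n phi) (dual_part degB m beta)
                  + hsc (ksign n) (act degB Delta phi (dual_d degB d (dual_part degB m beta))))"
    by (simp add: dvee_h_act[OF dual_homog_dual_part])
  also have "\<dots> = act degB Delta (dvee degB Delta eps d degM dM phi) beta
                  + hsc (ksign n) (act degB Delta phi (dual_d degB d beta))"
    by (simp add: sum.distrib dvee_hom_homog[OF phi] sum_dual_part[OF beta]
        flip: hsc.sum act_right.sum dual_d.sum)
  finally show ?thesis .
qed

lemma right_dg_module_hom_dvee:
  "right_dg_module_hom degB Delta eps d degM (dvee degB Delta eps d degM dM)"
  unfolding right_dg_module_hom_def
  by (simp add: hom_gr_dvee hom_homog_dvee dvee_add dvee_hsc dvee_dvee dvee_act hom_gr_act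
      hom_homog_act act_left.add act_right.add act_hsc act_scale_right act_assoc act_eps)

end

context
  fixes degM :: "'m \<Rightarrow> int" and degN :: "'n \<Rightarrow> int" and f and n :: int
  assumes f: "comod_hom degB Delta degM degN n f"
begin

lemma hom_gr_fvee: "hom_gr degB degM phi \<Longrightarrow> hom_gr degB degN (fvee degB Delta eps degM f phi)"
  unfolding fvee_def
  by (rule hom_gr_hext[where g = "\<lambda>k. k + n"])
     (simp_all add: additive.zero[OF additive_fvee_h] hom_homog_fvee_h[OF degree_comod_hom[OF f]])

lemma hom_homog_fvee:
  "hom_homog degB degM k phi \<Longrightarrow> hom_homog degB degN (k + n) (fvee degB Delta eps degM f phi)"
  by (simp add: fvee_hom_homog hom_homog_fvee_h[OF degree_comod_hom[OF f]])

lemma fvee_add: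
  "hom_gr degB degM phi \<Longrightarrow> hom_gr degB degM psi
     \<Longrightarrow> fvee degB Delta eps degM f (phi + psi)
         = fvee degB Delta eps degM f phi + fvee degB Delta eps degM f psi"
  unfolding fvee_def by (rule hext_add[OF additive_fvee_h])

lemma fvee_hsc:
  "hom_gr degB degM phi
     \<Longrightarrow> fvee degB Delta eps degM f (hsc c phi) = hsc c (fvee degB Delta eps degM f phi)"
  unfolding fvee_def by (rule hext_hsc[OF additive_fvee_h fvee_h_hsc])

lemma fvee_act:
  assumes phi: "hom_gr degB degM phi" and beta: "dual_el degB beta"
  shows "fvee degB Delta eps degM f (act degB Delta phi beta)
       = act degB Delta (fvee degB Delta eps degM f phi) beta"
proof -
  let ?M = "dual_degs degB beta" and ?K = "hdegs degB degM phi"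
  have fin: "finite (?M \<times> ?K)" using phi finite_dual_degs[OF beta] by (simp add: hom_gr_def)
  have "fvee degB Delta eps degM f (act degB Delta phi beta)
      = (\<Sum>mk\<in>?M \<times> ?K. fvee_h degB Delta eps f (snd mk + fst mk)
           (act degB Delta (hpart degB degM (snd mk) phi) (dual_part degB (fst mk) beta)))"
    unfolding fvee_def act_eq_sum_homog[OF phi beta] case_prod_unfold
    by (rule hext_sum[OF additive_fvee_h fin])
       (auto intro: hom_homog_act hom_homog_hpart dual_homog_dual_part)
  also have "\<dots> = (\<Sum>(m, k)\<in>?M \<times> ?K.
           act degB Delta (fvee_h degB Delta eps f k (hpart degB degM k phi)) (dual_part degB m beta))"
    by (simp add: fvee_h_act[OF dual_homog_dual_part] case_prod_unfold)
  also have "\<dots> = act degB Delta (\<Sum>k\<in>?K. fvee_h degB Delta eps f k (hpart degB degM k phi))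
                    (\<Sum>m\<in>?M. dual_part degB m beta)"
    by (simp only: act_left.sum act_right.sum sum.cartesian_product)
  also have "\<dots> = act degB Delta (fvee degB Delta eps degM f phi) beta"
    using phi by (simp add: fvee_def hext_superset[OF _ order_refl] hom_gr_def
        sum_dual_part[OF beta] additive.zero[OF additive_fvee_h])
  finally show ?thesis .
qed

lemma fvee_commutator:
  assumes M: "free_dg_comodule degB Delta d degM dM" and phi: "hom_gr degB degM phi"
  shows "fvee degB Delta eps degM (\<lambda>y. lin dN (f y) - sc (ksign n) (lin f (dM y))) phi
       = dvee degB Delta eps d degN dN (fvee degB Delta eps degM f phi)
         - hsc (ksign n) (fvee degB Delta eps degM f (dvee degB Delta eps d degM dM phi))"
  unfolding fvee_def dvee_def
  by (simp add: fvee_h_commutator[OF f M] hext_op_diff hext_op_hsc phi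
      hext_hext[OF additive_fvee_h additive_dvee_h hom_homog_fvee_h[OF degree_comod_hom[OF f]]]
      hext_hext[OF additive_dvee_h additive_fvee_h hom_homog_dvee_h[OF M]])

lemma fvee_comp:
  assumes "hom_gr degB degM phi"
  shows "fvee degB Delta eps degM (\<lambda>y. lin g (f y)) phi
       = fvee degB Delta eps degN g (fvee degB Delta eps degM f phi)"
  unfolding fvee_def
  by (simp add: assms fvee_h_comp[OF f]
      hext_hext[OF additive_fvee_h additive_fvee_h hom_homog_fvee_h[OF degree_comod_hom[OF f]]])

end

lemma fvee_fun_add:
  "fvee degB Delta eps degM (\<lambda>y. f y + g y) phi = fvee degB Delta eps degM f phi + fvee degB Delta eps degM g phi"
  by (simp add: fvee_def fvee_h_fun_add hext_op_add)

lemma fvee_fun_sc: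
  "fvee degB Delta eps degM (\<lambda>y. sc c (f y)) phi = hsc c (fvee degB Delta eps degM f phi)"
  by (simp add: fvee_def fvee_h_fun_sc hext_op_hsc)

lemma fvee_bvec: "hom_gr degB degM phi \<Longrightarrow> fvee degB Delta eps degM bvec phi = phi"
  by (simp add: fvee_def fvee_h_bvec hext_superset[OF _ order_refl] sum_hpart hom_gr_def)

end

theorem proposition2p2:
  fixes degB :: "'b \<Rightarrow> int"
    and Delta :: "'b \<Rightarrow> ('b \<times> 'b \<Rightarrow>\<^sub>0 'k::field)"
    and eps :: "'b \<Rightarrow> 'k"
    and d :: "'b \<Rightarrow> ('b \<Rightarrow>\<^sub>0 'k)"
  assumes B: "dg_coalgebra degB Delta eps d"
  shows
    \<comment> \<open>(1) d_M^vee makes Hom_gr(B,M) a right dg-module over (B*, d)\<close>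
    "(\<forall>(degM :: 'm \<Rightarrow> int) dM.
        free_dg_comodule degB Delta d degM dM \<longrightarrow>
        right_dg_module_hom degB Delta eps d degM (dvee degB Delta eps d degM dM))
     \<and>
     \<comment> \<open>(2) f |-> f^vee is a dg-functor\<close>
     (\<forall>(degM :: 'm \<Rightarrow> int) dM (degN :: 'n \<Rightarrow> int) dN (degO :: 'o \<Rightarrow> int) dO.
        free_dg_comodule degB Delta d degM dM \<longrightarrow>
        free_dg_comodule degB Delta d degN dN \<longrightarrow>
        free_dg_comodule degB Delta d degO dO \<longrightarrow>
        \<comment> \<open>f^vee is a degree n morphism of right dg-modules, and F commutes with the Hom differentials\<close>
        (\<forall>n f. comod_hom degB Delta degM degN n f \<longrightarrow>
           (\<forall>phi. hom_gr degB degM phi \<longrightarrow> hom_gr degB degN (fvee degB Delta eps degM f phi)) \<and>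
           (\<forall>k phi. hom_homog degB degM k phi \<longrightarrow>
              hom_homog degB degN (k + n) (fvee degB Delta eps degM f phi)) \<and>
           (\<forall>phi psi. hom_gr degB degM phi \<longrightarrow> hom_gr degB degM psi \<longrightarrow>
              fvee degB Delta eps degM f (phi + psi)
                = fvee degB Delta eps degM f phi + fvee degB Delta eps degM f psi) \<and>
           (\<forall>c phi. hom_gr degB degM phi \<longrightarrow>
              fvee degB Delta eps degM f (hsc c phi) = hsc c (fvee degB Delta eps degM f phi)) \<and>
           (\<forall>phi beta. hom_gr degB degM phi \<longrightarrow> dual_el degB beta \<longrightarrow>
              fvee degB Delta eps degM f (act degB Delta phi beta)
                = act degB Delta (fvee degB Delta eps degM f phi) beta) \<and>
           (\<forall>phi. hom_gr degB degM phi \<longrightarrow>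
              fvee degB Delta eps degM (\<lambda>y. lin dN (f y) - sc (ksign n) (lin f (dM y))) phi
                = dvee degB Delta eps d degN dN (fvee degB Delta eps degM f phi)
                  - hsc (ksign n) (fvee degB Delta eps degM f (dvee degB Delta eps d degM dM phi)))) \<and>
        \<comment> \<open>k-linearity on morphisms\<close>
        (\<forall>n f g. comod_hom degB Delta degM degN n f \<longrightarrow> comod_hom degB Delta degM degN n g \<longrightarrow>
           (\<forall>phi. hom_gr degB degM phi \<longrightarrow>
              fvee degB Delta eps degM (\<lambda>y. f y + g y) phi
                = fvee degB Delta eps degM f phi + fvee degB Delta eps degM g phi)) \<and>
        (\<forall>n c f. comod_hom degB Delta degM degN n f \<longrightarrow>
           (\<forall>phi. hom_gr degB degM phi \<longrightarrow>
              fvee degB Delta eps degM (\<lambda>y. sc c (f y)) phi = hsc c (fvee degB Delta eps degM f phi))) \<and>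
        \<comment> \<open>compatibility with composition and identities\<close>
        (\<forall>n m f g. comod_hom degB Delta degM degN n f \<longrightarrow> comod_hom degB Delta degN degO m g \<longrightarrow>
           (\<forall>phi. hom_gr degB degM phi \<longrightarrow>
              fvee degB Delta eps degM (\<lambda>y. lin g (f y)) phi
                = fvee degB Delta eps degN g (fvee degB Delta eps degM f phi))) \<and>
        (\<forall>phi. hom_gr degB degM phi \<longrightarrow> fvee degB Delta eps degM bvec phi = phi))"
proof -
  interpret dg_coalg degB Delta eps d by (rule dg_coalg.intro) (rule B)
  show ?thesis
    by (intro conjI allI impI)
       (simp_all add: right_dg_module_hom_dvee hom_gr_fvee hom_homog_fvee fvee_add fvee_hsc fvee_act
         fvee_commutator fvee_comp fvee_fun_add fvee_fun_sc fvee_bvec)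
qed

end
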